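(* Consider the impulsive system $\dot S=S(A-S)-\beta_0 IS$, $\dot I=\beta_0 IS-(\sigma+g)I$ for $t\neq nT$, $S(nT)=(1-p)S(nT^-)$, $I(nT)=I(nT^-)$, with $A>S_c$, and set $$T_1(p)=\frac{|\ln(1-p)|}{A},\qquad T_2(p)=\frac{|\ln(1-p)|}{A-S_c}.$$ For $p>0$: (1) if $T<T_1(p)$, there are no non-trivial periodic solutions and the trivial equilibrium $(0,0)$ is stable; (2) if $T_1(p)<T<T_2(p)$, the disease-free periodic solution $(\mathcal{S},0)$ is stable and $(0,0)$ is unstable; (3) if $T>T_2(p)$, both $(\mathcal{S},0)$ and $(0,0)$ are unstable.
   Context: Parameters: $A\in(0,1]$, $\beta_0>0$, $\sigma,g\ge0$ with $\sigma+g>0$, $p\in(0,1)$, $T>0$; $S_c=(\sigma+g)/\beta_0$; it is assumed $S(t)\le A$. $\mathcal{S}$ is the $T$-periodic function given for $nT\le t<(n+1)T$ by $\mathcal{S}(t)=\frac{A[e^{AT}(1-p)-1]}{e^{AT}(1-p)-1+pe^{A(T-(t-nT))}}$. Stability of a $T$-periodic solution through $x_0$: for every neighbourhood $V$ of $x_0$ there is a neighbourhood $W\subset V$ with $\varphi(kT,y_0)\in V$ for all $y_0\in W$, $k\in\mathbb{N}$; unstable means not stable. *)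

theory Defs
  imports "HOL-Analysis.Analysis"
begin

text \<open>Solutions are
  right-continuous and considered on [0, \<infinity>).\<close>

definition Sc :: "real \<Rightarrow> real \<Rightarrow> real \<Rightarrow> real" where
  "Sc beta0 sg g = (sg + g) / beta0"

definition vfield :: "real \<Rightarrow> real \<Rightarrow> real \<Rightarrow> real \<Rightarrow> real \<times> real \<Rightarrow> real \<times> real" where
  "vfield A beta0 sg g x =
     (fst x * (A - fst x) - beta0 * snd x * fst x,
      beta0 * snd x * fst x - (sg + g) * snd x)"

definition phase_dom :: "real \<Rightarrow> (real \<times> real) set" where
  "phase_dom A = {x. 0 \<le> fst x \<and> fst x \<le> A \<and> 0 \<le> snd x}"

definition is_solution ::
  "real \<Rightarrow> real \<Rightarrow> real \<Rightarrow> real \<Rightarrow> real \<Rightarrow> real \<Rightarrow> (real \<Rightarrow> real \<times> real) \<Rightarrow> bool" where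
  "is_solution A beta0 sg g p T x \<longleftrightarrow>
     (\<forall>n::nat. \<forall>t. real n * T < t \<and> t < real (Suc n) * T \<longrightarrow>
        (x has_vector_derivative vfield A beta0 sg g (x t)) (at t)) \<and>
     (\<forall>n::nat. (x \<longlongrightarrow> x (real n * T)) (at_right (real n * T))) \<and>
     (\<forall>n::nat. n \<ge> 1 \<longrightarrow> (\<exists>L. (x \<longlongrightarrow> L) (at_left (real n * T)) \<and>
        x (real n * T) = ((1 - p) * fst L, snd L)))"

definition is_T_periodic :: "real \<Rightarrow> (real \<Rightarrow> real \<times> real) \<Rightarrow> bool" where
  "is_T_periodic T x \<longleftrightarrow> (\<forall>t\<ge>0. x (t + T) = x t)"

definition nbhd :: "real \<Rightarrow> real \<times> real \<Rightarrow> (real \<times> real) set \<Rightarrow> bool" where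
  "nbhd A x0 V \<longleftrightarrow> V \<subseteq> phase_dom A \<and>
     (\<exists>U. openin (top_of_set (phase_dom A)) U \<and> x0 \<in> U \<and> U \<subseteq> V)"

definition is_stable ::
  "real \<Rightarrow> real \<Rightarrow> real \<Rightarrow> real \<Rightarrow> real \<Rightarrow> real \<Rightarrow> real \<times> real \<Rightarrow> bool" where
  "is_stable A beta0 sg g p T x0 \<longleftrightarrow>
     (\<forall>V. nbhd A x0 V \<longrightarrow>
        (\<exists>W. nbhd A x0 W \<and> W \<subseteq> V \<and>
           (\<forall>x. is_solution A beta0 sg g p T x \<and> x 0 \<in> W \<longrightarrow>
              (\<forall>k::nat. x (real k * T) \<in> V))))"

definition calS :: "real \<Rightarrow> real \<Rightarrow> real \<Rightarrow> real \<Rightarrow> real" where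
  "calS A p T t =
     (let n = \<lfloor>t / T\<rfloor> in
      A * (exp (A * T) * (1 - p) - 1) /
        (exp (A * T) * (1 - p) - 1 + p * exp (A * (T - (t - real_of_int n * T)))))"

definition T1 :: "real \<Rightarrow> real \<Rightarrow> real" where
  "T1 A p = \<bar>ln (1 - p)\<bar> / A"

definition T2 :: "real \<Rightarrow> real \<Rightarrow> real \<Rightarrow> real \<Rightarrow> real \<Rightarrow> real" where
  "T2 A beta0 sg g p = \<bar>ln (1 - p)\<bar> / (A - Sc beta0 sg g)"

end

theory Submission
  imports Defs
begin

(* Between impulses 1/S satisfies (1/S)' = -A (1/S - 1/A) + b I/S, so over one period 1/S is
   squeezed between explicit affine maps; on the disease-free line I = 0 the map is exactly
   z -> alpha z + beta, which has an attracting fixed point zeta = 1 / calS(0) precisely when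
   (1 - p) exp (A T) > 1, i.e. T > T1; otherwise S dies out. Along the flow the quantity
   I S^b exp (-(b A - gamma) t) does not increase, and the impulse multiplies S^b by (1 - p)^b, so
   I S^b at the impulse times grows per period by at most exp mu, and near (calS, 0) by at
   least exp (mu - epsilon), where mu = b ((A - S_c) T - |ln (1 - p)|) changes sign at T = T2.
   The solutions needed to witness instability are constructed period by period, by Picard
   iteration for a clipped, globally Lipschitz version of the field. *)

section \<open>Differential inequalities\<close>

lemma differential_inequality_lower:
  fixes f f' :: "real \<Rightarrow> real"
  assumes cont: "continuous_on {a..b} f"
    and deriv: "\<And>t. a < t \<Longrightarrow> t < b \<Longrightarrow> (f has_real_derivative f' t) (at t)"
    and ge: "\<And>t. a < t \<Longrightarrow> t < b \<Longrightarrow> r * f t \<le> f' t"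
    and t: "a \<le> t" "t \<le> b"
  shows "f a * exp (r * (t - a)) \<le> f t"
proof -
  define h where "h s = f s * exp (- r * (s - a))" for s
  have "h a \<le> h t"
  proof (rule DERIV_nonneg_imp_increasing_open[OF t(1)])
    fix s assume s: "a < s" "s < t"
    then have "(h has_real_derivative (f' s - r * f s) * exp (- r * (s - a))) (at s)"
      unfolding h_def using t
      by (auto intro!: derivative_eq_intros deriv simp: algebra_simps)
    moreover have "(f' s - r * f s) * exp (- r * (s - a)) \<ge> 0"
      using ge[of s] s t by simp
    ultimately show "\<exists>y. (h has_real_derivative y) (at s) \<and> 0 \<le> y" by blast
  next
    show "continuous_on {a..t} h"
      unfolding h_def using t by (intro continuous_intros continuous_on_subset[OF cont]) auto
  qed
  then have "f a \<le> f t * exp (- r * (t - a))" by (simp add: h_def)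
  then have "f a * exp (r * (t - a)) \<le> f t * exp (- r * (t - a)) * exp (r * (t - a))"
    by (simp add: mult_right_mono)
  also have "\<dots> = f t" by (simp add: mult.assoc flip: exp_add)
  finally show ?thesis .
qed

lemma differential_inequality_upper:
  fixes f f' :: "real \<Rightarrow> real"
  assumes "continuous_on {a..b} f"
    and "\<And>t. a < t \<Longrightarrow> t < b \<Longrightarrow> (f has_real_derivative f' t) (at t)"
    and "\<And>t. a < t \<Longrightarrow> t < b \<Longrightarrow> f' t \<le> r * f t"
    and "a \<le> t" "t \<le> b"
  shows "f t \<le> f a * exp (r * (t - a))"
  using differential_inequality_lower[where f="\<lambda>s. - f s" and f'="\<lambda>s. - f' s" and b=b] assms
  by (auto intro!: continuous_intros derivative_eq_intros)

lemma multiplicative_ode_square_bounds: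
  fixes u h :: "real \<Rightarrow> real"
  assumes cont: "continuous_on {a..b} u"
    and deriv: "\<And>t. a < t \<Longrightarrow> t < b \<Longrightarrow> (u has_real_derivative u t * h t) (at t)"
    and bound: "\<And>t. a < t \<Longrightarrow> t < b \<Longrightarrow> \<bar>h t\<bar> \<le> K"
    and t: "a \<le> t" "t \<le> b"
  shows "(u a)\<^sup>2 * exp (- 2 * K * (t - a)) \<le> (u t)\<^sup>2"
    and "(u t)\<^sup>2 \<le> (u a)\<^sup>2 * exp (2 * K * (t - a))"
proof -
  have cont2: "continuous_on {a..b} (\<lambda>t. (u t)\<^sup>2)"
    by (intro continuous_intros cont)
  have deriv2: "((\<lambda>t. (u t)\<^sup>2) has_real_derivative 2 * h s * (u s)\<^sup>2) (at s)" if "a < s" "s < b" for s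
    using that by (auto intro!: derivative_eq_intros deriv simp: power2_eq_square algebra_simps)
  show "(u a)\<^sup>2 * exp (- 2 * K * (t - a)) \<le> (u t)\<^sup>2"
  proof (rule differential_inequality_lower[OF cont2 deriv2 _ t])
    fix s assume "a < s" "s < b"
    then have "- 2 * K \<le> 2 * h s" using bound[of s] by simp
    then show "- 2 * K * (u s)\<^sup>2 \<le> 2 * h s * (u s)\<^sup>2" by (rule mult_right_mono) simp
  qed
  show "(u t)\<^sup>2 \<le> (u a)\<^sup>2 * exp (2 * K * (t - a))"
  proof (rule differential_inequality_upper[OF cont2 deriv2 _ t])
    fix s assume "a < s" "s < b"
    then have "2 * h s \<le> 2 * K" using bound[of s] by simp
    then show "2 * h s * (u s)\<^sup>2 \<le> 2 * K * (u s)\<^sup>2" by (rule mult_right_mono) simp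
  qed
qed

lemma multiplicative_ode_zero:
  fixes u h :: "real \<Rightarrow> real"
  assumes "continuous_on {a..b} u"
    and "\<And>t. a < t \<Longrightarrow> t < b \<Longrightarrow> (u has_real_derivative u t * h t) (at t)"
    and "\<And>t. a < t \<Longrightarrow> t < b \<Longrightarrow> \<bar>h t\<bar> \<le> K"
    and "u a = 0" "a \<le> t" "t \<le> b"
  shows "u t = 0"
  using multiplicative_ode_square_bounds(2)[OF assms(1-3,5,6)] assms(4) by simp

lemma multiplicative_ode_pos:
  fixes u h :: "real \<Rightarrow> real"
  assumes cont: "continuous_on {a..b} u"
    and deriv: "\<And>t. a < t \<Longrightarrow> t < b \<Longrightarrow> (u has_real_derivative u t * h t) (at t)"
    and bound: "\<And>t. a < t \<Longrightarrow> t < b \<Longrightarrow> \<bar>h t\<bar> \<le> K"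
    and pos: "u a > 0" and t: "a \<le> t" "t \<le> b"
  shows "u t > 0"
proof (rule ccontr)
  assume "\<not> u t > 0"
  moreover have "continuous_on {a..t} u"
    by (rule continuous_on_subset[OF cont]) (use t in auto)
  ultimately obtain s where s: "a \<le> s" "s \<le> t" "u s = 0"
    using IVT2'[of u t 0 a] pos t by force
  have "(u a)\<^sup>2 * exp (- 2 * K * (s - a)) \<le> (u s)\<^sup>2"
    using s t by (intro multiplicative_ode_square_bounds(1)[OF cont deriv bound]) auto
  moreover have "(u a)\<^sup>2 * exp (- 2 * K * (s - a)) > 0" using pos by simp
  ultimately show False using s(3) by simp
qed

lemma nonpos_if_deriv_nonpos_where_pos:
  fixes f f' :: "real \<Rightarrow> real"
  assumes cont: "continuous_on {a..b} f"
    and deriv: "\<And>t. a < t \<Longrightarrow> t < b \<Longrightarrow> (f has_real_derivative f' t) (at t)"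
    and nonpos: "\<And>t. a < t \<Longrightarrow> t < b \<Longrightarrow> f t > 0 \<Longrightarrow> f' t \<le> 0"
    and start: "f a \<le> 0" and t: "a \<le> t" "t \<le> b"
  shows "f t \<le> 0"
proof (rule ccontr)
  assume "\<not> f t \<le> 0"
  then have ft: "f t > 0" by simp
  define Z where "Z = {a..t} \<inter> f -` {..0}"
  have cont_t: "continuous_on {a..t} f" by (rule continuous_on_subset[OF cont]) (use t in auto)
  have "closed Z" unfolding Z_def by (rule continuous_closed_preimage[OF cont_t]) auto
  moreover have "a \<in> Z" using start t by (auto simp: Z_def)
  moreover have bdd: "bdd_above Z" by (auto simp: Z_def bdd_above_def)
  ultimately have "Sup Z \<in> Z" by (intro closed_contains_Sup) auto
  define t0 where "t0 = Sup Z"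
  have t0: "a \<le> t0" "t0 \<le> t" "f t0 \<le> 0" using \<open>Sup Z \<in> Z\<close> by (auto simp: Z_def t0_def)
  have pos_after: "f s > 0" if "t0 < s" "s \<le> t" for s
  proof (rule ccontr)
    assume "\<not> f s > 0"
    then have "s \<in> Z" using that t0 by (auto simp: Z_def)
    then have "s \<le> t0" using cSup_upper[OF _ bdd] by (simp add: t0_def)
    then show False using that by simp
  qed
  have "t0 < t" using t0 ft by (cases "t0 = t") auto
  have "f t \<le> f t0"
  proof (rule DERIV_nonpos_imp_decreasing_open[OF less_imp_le[OF \<open>t0 < t\<close>]])
    fix s assume "t0 < s" "s < t"
    then show "\<exists>y. (f has_real_derivative y) (at s) \<and> y \<le> 0"
      using deriv[of s] nonpos[of s] pos_after[of s] t0 t by force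
  next
    show "continuous_on {t0..t} f" using cont_t by (rule continuous_on_subset) (use t0 in auto)
  qed
  then show False using ft t0 by simp
qed

lemma has_real_derivative_fst:
  "(y has_vector_derivative v) F \<Longrightarrow> ((\<lambda>t. fst (y t)) has_real_derivative fst v) F"
  unfolding has_vector_derivative_def has_field_derivative_def
  by (drule has_derivative_fst) (simp add: mult.commute[of _ "fst v"] mult_commute_abs)

lemma has_real_derivative_snd:
  "(y has_vector_derivative v) F \<Longrightarrow> ((\<lambda>t. snd (y t)) has_real_derivative snd v) F"
  unfolding has_vector_derivative_def has_field_derivative_def
  by (drule has_derivative_snd) (simp add: mult.commute[of _ "snd v"] mult_commute_abs)

lemma continuous_on_shift_limits:
  fixes z :: "real \<Rightarrow> 'a::topological_space"
  assumes "continuous_on {0..T} z" "0 < T"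
  shows "((\<lambda>t. z (t - a)) \<longlongrightarrow> z 0) (at_right a)"
    and "((\<lambda>t. z (t - a)) \<longlongrightarrow> z T) (at_left (a + T))"
proof -
  have "continuous_on {a..a + T} (\<lambda>t. z (t - a))"
    by (rule continuous_on_compose2[OF assms(1)]) (auto intro!: continuous_intros)
  then have "((\<lambda>t. z (t - a)) \<longlongrightarrow> z (s - a)) (at s within {a..a + T})" if "s \<in> {a..a + T}" for s
    using that by (simp add: continuous_on_def)
  from this[of a] this[of "a + T"] assms(2)
  show "((\<lambda>t. z (t - a)) \<longlongrightarrow> z 0) (at_right a)"
    and "((\<lambda>t. z (t - a)) \<longlongrightarrow> z T) (at_left (a + T))"
    by (simp_all add: at_within_Icc_at_right at_within_Icc_at_left)
qed

section \<open>Equations with a globally Lipschitz field\<close>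

lemma exp_weighted_integral_diff_le:
  fixes u w :: "real \<Rightarrow> 'a::banach"
  assumes L: "0 < L" and \<tau>: "0 \<le> \<tau>" and d: "0 \<le> d"
    and cont: "continuous_on {0..\<tau>} u" "continuous_on {0..\<tau>} w"
    and bound: "\<And>r. r \<in> {0..\<tau>} \<Longrightarrow> norm (u r - w r) \<le> d * (L * exp (2 * L * r))"
  shows "exp (- 2 * L * \<tau>) * norm (integral {0..\<tau>} u - integral {0..\<tau>} w) \<le> d / 2"
proof -
  have "((\<lambda>r. d * (L * exp (2 * L * r))) has_integral d * exp (2 * L * \<tau>) / 2 - d * exp (2 * L * 0) / 2) {0..\<tau>}"
  proof (rule fundamental_theorem_of_calculus[OF \<tau>])
    fix r assume "r \<in> {0..\<tau>}"
    have "((\<lambda>r. d * exp (2 * L * r) / 2) has_real_derivative d * (L * exp (2 * L * r))) (at r within {0..\<tau>})"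
      by (auto intro!: derivative_eq_intros)
    then show "((\<lambda>r. d * exp (2 * L * r) / 2) has_vector_derivative d * (L * exp (2 * L * r)))
        (at r within {0..\<tau>})"
      by (simp add: has_real_derivative_iff_has_vector_derivative)
  qed
  then have "integral {0..\<tau>} (\<lambda>r. d * (L * exp (2 * L * r))) = d * exp (2 * L * \<tau>) / 2 - d * exp (2 * L * 0) / 2"
    by (rule integral_unique)
  then have weight: "integral {0..\<tau>} (\<lambda>r. d * (L * exp (2 * L * r))) = d * (exp (2 * L * \<tau>) - 1) / 2"
    by (simp add: right_diff_distrib diff_divide_distrib)
  have "norm (integral {0..\<tau>} u - integral {0..\<tau>} w) = norm (integral {0..\<tau>} (\<lambda>r. u r - w r))"
    using cont by (simp add: integral_diff integrable_continuous_interval)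
  also have "\<dots> \<le> integral {0..\<tau>} (\<lambda>r. d * (L * exp (2 * L * r)))"
    using cont by (intro integral_norm_bound_integral bound)
      (auto intro!: integrable_continuous_interval continuous_intros)
  finally have "exp (- 2 * L * \<tau>) * norm (integral {0..\<tau>} u - integral {0..\<tau>} w)
      \<le> exp (- 2 * L * \<tau>) * (d * (exp (2 * L * \<tau>) - 1) / 2)"
    unfolding weight by (rule mult_left_mono) simp
  also have "\<dots> = d / 2 * (exp (- 2 * L * \<tau>) * exp (2 * L * \<tau>) - exp (- 2 * L * \<tau>))"
    by (simp add: field_simps)
  also have "\<dots> = d / 2 * (1 - exp (- 2 * L * \<tau>))"
    by (simp flip: exp_add)
  also have "\<dots> \<le> d / 2" using d by (simp add: mult_left_le)
  finally show ?thesis .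
qed

text \<open>Picard-Lindeloef without a smallness condition on T: the integral operator becomes a
  1/2-contraction on bounded continuous functions once they are rescaled by exp (2 L t).\<close>

lemma lipschitz_ode_solution_exists:
  fixes G :: "'a::banach \<Rightarrow> 'a" and x0 :: 'a
  assumes L: "0 < L" and lip: "\<And>u v. dist (G u) (G v) \<le> L * dist u v" and T: "0 \<le> T"
  shows "\<exists>y. continuous_on {0..T} y \<and> y 0 = x0 \<and>
     (\<forall>t. 0 < t \<and> t < T \<longrightarrow> (y has_vector_derivative G (y t)) (at t))"
proof -
  have contG: "continuous_on UNIV G"
    by (rule lipschitz_on_continuous_on[of L]) (auto simp: lipschitz_on_def lip L less_imp_le)
  define h where "h v r = G (exp (2 * L * r) *\<^sub>R apply_bcontfun v r)" for v :: "real \<Rightarrow>\<^sub>C 'a" and r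
  have cont_h: "continuous_on S (h v)" for v S
    unfolding h_def by (rule continuous_on_compose2[OF contG]) (auto intro!: continuous_intros)
  have cont_integral: "continuous_on {0..T} (\<lambda>t. integral {0..t} (h v))" for v
    using integral_has_vector_derivative[OF cont_h] has_vector_derivative_continuous
    by (metis continuous_on_eq_continuous_within)
  define F where "F v t = exp (- 2 * L * t) *\<^sub>R (x0 + integral {0..t} (h v))" for v t
  have "continuous_on (cbox 0 T) (F v)" for v
    unfolding F_def cbox_interval by (intro continuous_intros cont_integral)
  then have "\<exists>w. \<forall>t. apply_bcontfun w t = F v (clamp 0 T t)" for v
    using continuous_on_cbox_bcontfunE by metis
  then obtain \<Phi> where \<Phi>: "\<And>v t. apply_bcontfun (\<Phi> v) t = F v (clamp 0 T t)" by metis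
  have contraction: "dist (\<Phi> v) (\<Phi> w) \<le> 1 / 2 * dist v w" for v w
  proof (rule dist_bound)
    fix t
    define \<tau> where "\<tau> = clamp 0 T t"
    define d where "d = dist v w"
    have \<tau>: "0 \<le> \<tau>" using clamp_in_interval[of 0 T t] T by (simp add: \<tau>_def cbox_interval)
    have pointwise: "norm (h v r - h w r) \<le> d * (L * exp (2 * L * r))" for r
    proof -
      have "norm (h v r - h w r) \<le> L * dist (exp (2 * L * r) *\<^sub>R v r) (exp (2 * L * r) *\<^sub>R w r)"
        unfolding h_def dist_norm[symmetric] by (rule lip)
      also have "\<dots> = L * exp (2 * L * r) * dist (v r) (w r)"
        by (simp add: dist_norm flip: scaleR_right_diff_distrib)
      also have "\<dots> \<le> L * exp (2 * L * r) * d"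
        unfolding d_def using L by (intro mult_left_mono dist_bounded) auto
      finally show ?thesis by (simp add: algebra_simps)
    qed
    have "dist (\<Phi> v t) (\<Phi> w t)
        = exp (- 2 * L * \<tau>) * norm (integral {0..\<tau>} (h v) - integral {0..\<tau>} (h w))"
      by (simp add: \<Phi> F_def \<tau>_def dist_norm flip: scaleR_right_diff_distrib)
    also have "\<dots> \<le> d / 2"
      by (rule exp_weighted_integral_diff_le[OF L \<tau> _ cont_h cont_h pointwise]) (simp add: d_def)
    finally show "dist (\<Phi> v t) (\<Phi> w t) \<le> 1 / 2 * dist v w" by (simp add: d_def)
  qed
  obtain v where v: "\<Phi> v = v" using banach_fix_type[of "1/2" \<Phi>] contraction by auto
  define y where "y t = x0 + integral {0..t} (h v)" for t
  have y_v: "y t = exp (2 * L * t) *\<^sub>R v t" if "t \<in> {0..T}" for t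
  proof -
    have "clamp 0 T t = t" using clamp_cancel_cbox[of t 0 T] that by (simp add: cbox_interval)
    then have "v t = exp (- 2 * L * t) *\<^sub>R y t" using \<Phi>[of v t] v by (simp add: F_def y_def)
    then show ?thesis by (simp flip: exp_add)
  qed
  have "continuous_on {0..T} y" unfolding y_def by (intro continuous_intros cont_integral)
  moreover have "(y has_vector_derivative G (y t)) (at t)" if "0 < t" "t < T" for t
  proof -
    have "((\<lambda>u. integral {0..u} (h v)) has_vector_derivative h v t) (at t within {0..T})"
      by (rule integral_has_vector_derivative[OF cont_h]) (use that in auto)
    then have "((\<lambda>u. integral {0..u} (h v)) has_vector_derivative h v t) (at t)"
      using at_within_Icc_at[OF that] by simp
    then have "(y has_vector_derivative h v t) (at t)"
      unfolding y_def by (auto intro!: derivative_eq_intros)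
    then show ?thesis using y_v[of t] that by (simp add: h_def)
  qed
  moreover have "y 0 = x0" by (simp add: y_def)
  ultimately show ?thesis by blast
qed

lemma abs_mult_diff_le:
  fixes x y x' y' :: real
  assumes "\<bar>y\<bar> \<le> Y" "\<bar>x'\<bar> \<le> X"
  shows "\<bar>x * y - x' * y'\<bar> \<le> \<bar>x - x'\<bar> * Y + X * \<bar>y - y'\<bar>"
proof -
  have "x * y - x' * y' = (x - x') * y + x' * (y - y')" by (simp add: algebra_simps)
  also have "\<bar>\<dots>\<bar> \<le> \<bar>x - x'\<bar> * \<bar>y\<bar> + \<bar>x'\<bar> * \<bar>y - y'\<bar>" by (simp add: abs_mult abs_triangle_ineq[THEN order_trans])
  also have "\<dots> \<le> \<bar>x - x'\<bar> * Y + X * \<bar>y - y'\<bar>"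
    using assms by (intro add_mono mult_mono) auto
  finally show ?thesis .
qed

definition clip :: "real \<Rightarrow> real \<Rightarrow> real" where
  "clip M u = max 0 (min M u)"

lemma abs_clip_diff_le: "\<bar>clip M u - clip M v\<bar> \<le> \<bar>u - v\<bar>"
  by (auto simp: clip_def)

lemma dist_origin: "dist (0, 0) z = norm (z :: 'a::real_normed_vector \<times> 'b::real_normed_vector)"
  by (metis dist_0_norm zero_prod_def)

lemma dist_le_abs_fst_snd: "dist u v \<le> \<bar>fst u - fst v\<bar> + \<bar>snd u - snd (v :: real \<times> real)\<bar>"
proof -
  have "u - v = (fst u - fst v, snd u - snd v)" by (simp add: prod_eq_iff)
  then show ?thesis using norm_Pair_le[of "fst u - fst v" "snd u - snd v"] by (simp add: dist_norm)
qed

lemma abs_inverse_diff_le: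
  fixes x y :: real
  assumes "0 < y" "\<bar>x - y\<bar> \<le> y / 2"
  shows "\<bar>1 / x - 1 / y\<bar> \<le> 2 * \<bar>x - y\<bar> / y\<^sup>2"
proof -
  have "y / 2 \<le> x" using assms by linarith
  then have "0 < x" using assms(1) by linarith
  have "\<bar>1 / x - 1 / y\<bar> = \<bar>x - y\<bar> / (x * y)"
    using \<open>0 < x\<close> assms(1) by (simp add: field_simps abs_minus_commute)
  also have "\<dots> \<le> \<bar>x - y\<bar> / (y / 2 * y)"
    using \<open>y / 2 \<le> x\<close> \<open>0 < x\<close> assms(1) by (intro divide_left_mono mult_right_mono) auto
  also have "\<dots> = 2 * \<bar>x - y\<bar> / y\<^sup>2" by (simp add: power2_eq_square)
  finally show ?thesis .
qed

lemma le_of_mult_powr_le: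
  fixes i s i0 s0 l u b :: real
  assumes "i * s powr b \<le> i0 * s0 powr b" "0 < l" "l \<le> s" "0 < s0" "s0 \<le> u" "0 \<le> i0" "0 \<le> b"
  shows "i \<le> i0 * (u / l) powr b"
proof -
  have "0 < l powr b" "l powr b \<le> s powr b" using assms by (auto intro: powr_mono2)
  then have "0 < s powr b" by linarith
  then have "i \<le> i0 * s0 powr b / s powr b" using assms(1) by (simp add: pos_le_divide_eq)
  also have "\<dots> \<le> i0 * u powr b / l powr b"
    using assms \<open>0 < l powr b\<close> \<open>l powr b \<le> s powr b\<close>
    by (intro frac_le mult_left_mono powr_mono2) auto
  finally show ?thesis by (simp add: powr_divide)
qed

lemma nbhd_obtain_ball:
  assumes "nbhd A x0 V"
  obtains e where "e > 0" "\<And>z. z \<in> phase_dom A \<Longrightarrow> dist x0 z < e \<Longrightarrow> z \<in> V"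
proof -
  obtain U where U: "openin (top_of_set (phase_dom A)) U" "x0 \<in> U" "U \<subseteq> V"
    using assms unfolding nbhd_def by blast
  obtain U' where "open U'" "U = phase_dom A \<inter> U'" using U(1) unfolding openin_open by blast
  moreover obtain e where "e > 0" "ball x0 e \<subseteq> U'"
    using open_contains_ball U(2) calculation by blast
  ultimately show ?thesis using that[of e] U(3) by (auto simp: subset_iff)
qed

lemma nbhd_phase_dom_ball:
  assumes "x0 \<in> phase_dom A" "e > 0"
  shows "nbhd A x0 (phase_dom A \<inter> ball x0 e)"
  unfolding nbhd_def using assms by (auto intro!: exI[of _ "phase_dom A \<inter> ball x0 e"])

section \<open>The SI equations between impulses\<close>

locale impulsive_SI =
  fixes A b sg g p T :: real
  assumes A_pos: "0 < A" and b_pos: "0 < b" and sg_g_pos: "0 < sg + g"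
    and p_pos: "0 < p" and p_less_1: "p < 1" and T_pos: "0 < T"
begin

abbreviation \<gamma> :: real where "\<gamma> \<equiv> sg + g"

lemma vfield_eq: "vfield A b sg g (s, i) = (s * (A - s - b * i), i * (b * s - \<gamma>))"
  by (simp add: vfield_def algebra_simps)

definition solves_on :: "real \<Rightarrow> real \<Rightarrow> (real \<Rightarrow> real \<times> real) \<Rightarrow> bool" where
  "solves_on a e y \<longleftrightarrow> continuous_on {a..e} y \<and>
     (\<forall>t. a < t \<and> t < e \<longrightarrow> (y has_vector_derivative vfield A b sg g (y t)) (at t))"

context
  fixes a e :: real and S I :: "real \<Rightarrow> real"
  assumes sol: "solves_on a e (\<lambda>t. (S t, I t))"
begin

lemma continuous_S: "continuous_on {a..e} S"
  using continuous_on_fst[of "{a..e}" "\<lambda>t. (S t, I t)"] sol by (simp add: solves_on_def)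

lemma continuous_I: "continuous_on {a..e} I"
  using continuous_on_snd[of "{a..e}" "\<lambda>t. (S t, I t)"] sol by (simp add: solves_on_def)

lemma deriv_SI:
  assumes "a < t" "t < e"
  shows "(S has_real_derivative S t * (A - S t - b * I t)) (at t)"
    and "(I has_real_derivative I t * (b * S t - \<gamma>)) (at t)"
proof -
  have "((\<lambda>t. (S t, I t)) has_vector_derivative vfield A b sg g (S t, I t)) (at t)"
    using sol assms by (simp add: solves_on_def)
  from has_real_derivative_fst[OF this] has_real_derivative_snd[OF this]
  show "(S has_real_derivative S t * (A - S t - b * I t)) (at t)"
    and "(I has_real_derivative I t * (b * S t - \<gamma>)) (at t)"
    by (simp_all add: vfield_eq)
qed

lemma bounded_growth_rates:
  obtains K where "\<And>t. a < t \<Longrightarrow> t < e \<Longrightarrow> \<bar>A - S t - b * I t\<bar> \<le> K \<and> \<bar>b * S t - \<gamma>\<bar> \<le> K"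
proof -
  have "compact ((\<lambda>t. (S t, I t)) ` {a..e})"
    using sol unfolding solves_on_def by (intro compact_continuous_image) auto
  then obtain H where H: "\<forall>z \<in> (\<lambda>t. (S t, I t)) ` {a..e}. norm z \<le> H"
    using compact_imp_bounded bounded_iff by metis
  have "\<bar>A - S t - b * I t\<bar> \<le> A + H + b * H + \<gamma> \<and> \<bar>b * S t - \<gamma>\<bar> \<le> A + H + b * H + \<gamma>"
    if "a < t" "t < e" for t
  proof -
    have "norm (S t, I t) \<le> H" using H that by auto
    then have SI: "\<bar>S t\<bar> \<le> H" "\<bar>I t\<bar> \<le> H"
      using norm_fst_le[of "S t" "I t"] norm_snd_le[of "I t" "S t"] by auto
    moreover have "\<bar>b * I t\<bar> \<le> b * H" "\<bar>b * S t\<bar> \<le> b * H"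
      using b_pos SI by (simp_all add: abs_mult)
    moreover have "0 \<le> H" using SI by linarith
    ultimately show ?thesis using A_pos sg_g_pos b_pos by arith
  qed
  then show ?thesis using that by blast
qed

lemma S_eq_0:
  assumes "S a = 0" "a \<le> t" "t \<le> e"
  shows "S t = 0"
proof -
  obtain K where "\<And>t. a < t \<Longrightarrow> t < e \<Longrightarrow> \<bar>A - S t - b * I t\<bar> \<le> K \<and> \<bar>b * S t - \<gamma>\<bar> \<le> K"
    using bounded_growth_rates by blast
  then show ?thesis using multiplicative_ode_zero[OF continuous_S deriv_SI(1), of K] assms by blast
qed

lemma S_pos:
  assumes "S a > 0" "a \<le> t" "t \<le> e"
  shows "S t > 0"
proof -
  obtain K where "\<And>t. a < t \<Longrightarrow> t < e \<Longrightarrow> \<bar>A - S t - b * I t\<bar> \<le> K \<and> \<bar>b * S t - \<gamma>\<bar> \<le> K"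
    using bounded_growth_rates by blast
  then show ?thesis using multiplicative_ode_pos[OF continuous_S deriv_SI(1), of K] assms by blast
qed

lemma I_eq_0:
  assumes "I a = 0" "a \<le> t" "t \<le> e"
  shows "I t = 0"
proof -
  obtain K where "\<And>t. a < t \<Longrightarrow> t < e \<Longrightarrow> \<bar>A - S t - b * I t\<bar> \<le> K \<and> \<bar>b * S t - \<gamma>\<bar> \<le> K"
    using bounded_growth_rates by blast
  then show ?thesis using multiplicative_ode_zero[OF continuous_I deriv_SI(2), of K] assms by blast
qed

lemma I_pos:
  assumes "I a > 0" "a \<le> t" "t \<le> e"
  shows "I t > 0"
proof -
  obtain K where "\<And>t. a < t \<Longrightarrow> t < e \<Longrightarrow> \<bar>A - S t - b * I t\<bar> \<le> K \<and> \<bar>b * S t - \<gamma>\<bar> \<le> K"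
    using bounded_growth_rates by blast
  then show ?thesis using multiplicative_ode_pos[OF continuous_I deriv_SI(2), of K] assms by blast
qed

lemma S_nonneg: "S a \<ge> 0 \<Longrightarrow> a \<le> t \<Longrightarrow> t \<le> e \<Longrightarrow> S t \<ge> 0"
  using S_pos S_eq_0 by (cases "S a = 0") force+

lemma I_nonneg: "I a \<ge> 0 \<Longrightarrow> a \<le> t \<Longrightarrow> t \<le> e \<Longrightarrow> I t \<ge> 0"
  using I_pos I_eq_0 by (cases "I a = 0") force+

lemma deriv_inverse_S:
  assumes "a < t" "t < e" "S t > 0"
  shows "((\<lambda>t. 1 / S t - k) has_real_derivative - A * (1 / S t - 1 / A) + b * I t / S t) (at t)"
proof -
  have "((\<lambda>t. inverse (S t) - k) has_real_derivative
      - (S t * (A - S t - b * I t) * inverse (S t ^ Suc (Suc 0))) - 0) (at t)"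
    by (intro DERIV_diff DERIV_inverse_fun deriv_SI assms DERIV_const) (use assms in auto)
  then have "((\<lambda>t. 1 / S t - k) has_real_derivative
      - (S t * (A - S t - b * I t) * inverse (S t ^ Suc (Suc 0))) - 0) (at t)"
    by (simp add: inverse_eq_divide)
  then show ?thesis
    by (rule DERIV_cong) (use assms A_pos in \<open>simp add: field_simps\<close>)
qed

lemma inverse_S_lower:
  assumes "S a > 0" "I a \<ge> 0" "a \<le> t" "t \<le> e"
  shows "(1 / S a - 1 / A) * exp (- A * (t - a)) \<le> 1 / S t - 1 / A"
proof (rule differential_inequality_lower[OF _ deriv_inverse_S _ assms(3,4)])
  show "continuous_on {a..e} (\<lambda>t. 1 / S t - 1 / A)"
    using S_pos[OF assms(1)] by (intro continuous_intros continuous_S) force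
  fix t assume t: "a < t" "t < e"
  then show "S t > 0" using S_pos[OF assms(1)] by auto
  have "b * I t / S t \<ge> 0" using b_pos I_nonneg[OF assms(2)] \<open>S t > 0\<close> t by simp
  then show "- A * (1 / S t - 1 / A) \<le> - A * (1 / S t - 1 / A) + b * I t / S t" by simp
qed

lemma inverse_S_upper:
  assumes "S a > 0" "b * M < A" "\<And>t. a < t \<Longrightarrow> t < e \<Longrightarrow> I t \<le> M" "a \<le> t" "t \<le> e"
  shows "1 / S t - 1 / (A - b * M) \<le> (1 / S a - 1 / (A - b * M)) * exp (- (A - b * M) * (t - a))"
proof (rule differential_inequality_upper[OF _ deriv_inverse_S _ assms(4,5)])
  show "continuous_on {a..e} (\<lambda>t. 1 / S t - 1 / (A - b * M))"
    using S_pos[OF assms(1)] by (intro continuous_intros continuous_S) force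
  fix t assume t: "a < t" "t < e"
  then show "S t > 0" using S_pos[OF assms(1)] by auto
  have "- A * (1 / S t - 1 / A) + b * I t / S t
      = - (A - b * M) * (1 / S t - 1 / (A - b * M)) + b * (I t - M) / S t"
    using \<open>S t > 0\<close> assms(2) A_pos by (simp add: field_simps)
  moreover have "b * (I t - M) / S t \<le> 0" using b_pos assms(3)[OF t] \<open>S t > 0\<close>
    by (simp add: divide_nonpos_pos mult_nonneg_nonpos)
  ultimately show "- A * (1 / S t - 1 / A) + b * I t / S t
      \<le> - (A - b * M) * (1 / S t - 1 / (A - b * M))" by linarith
qed

lemma S_le_A:
  assumes "0 \<le> S a" "S a \<le> A" "0 \<le> I a" "a \<le> t" "t \<le> e"
  shows "S t \<le> A"
proof (cases "S a = 0")
  case True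
  then show ?thesis using S_eq_0 assms A_pos by auto
next
  case False
  then have "S a > 0" using assms by auto
  moreover have "0 \<le> (1 / S a - 1 / A) * exp (- A * (t - a))"
    using assms \<open>S a > 0\<close> by (simp add: field_simps)
  ultimately have "0 \<le> 1 / S t - 1 / A" using inverse_S_lower assms by fastforce
  moreover have "S t > 0" using S_pos[OF \<open>S a > 0\<close> assms(4,5)] .
  ultimately show ?thesis using A_pos by (simp add: field_simps)
qed

lemma phase_dom_invariant:
  assumes "(S a, I a) \<in> phase_dom A" "a \<le> t" "t \<le> e"
  shows "(S t, I t) \<in> phase_dom A"
  using assms S_nonneg I_nonneg S_le_A unfolding phase_dom_def by auto

lemma S_le_exp:
  assumes "(S a, I a) \<in> phase_dom A" "a \<le> t" "t \<le> e"
  shows "S t \<le> S a * exp (A * (t - a))"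
proof (rule differential_inequality_upper[OF continuous_S deriv_SI(1) _ assms(2,3)])
  fix t assume "a < t" "t < e"
  then have "0 \<le> S t" "0 \<le> I t" using phase_dom_invariant[OF assms(1)] by (auto simp: phase_dom_def)
  then show "S t * (A - S t - b * I t) \<le> A * S t"
    using b_pos by (simp add: algebra_simps mult_left_mono)
qed

lemma I_le_exp:
  assumes "(S a, I a) \<in> phase_dom A" "a \<le> t" "t \<le> e"
  shows "I t \<le> I a * exp (b * A * (t - a))"
proof (rule differential_inequality_upper[OF continuous_I deriv_SI(2) _ assms(2,3)])
  fix t assume "a < t" "t < e"
  then have "0 \<le> I t" "S t \<le> A" using phase_dom_invariant[OF assms(1)] by (auto simp: phase_dom_def)
  moreover have "b * S t - \<gamma> \<le> b * A" using b_pos sg_g_pos \<open>S t \<le> A\<close> by (smt (verit) mult_left_mono)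
  ultimately show "I t * (b * S t - \<gamma>) \<le> b * A * I t" by (simp add: mult_left_mono mult.commute)
qed

lemma I_le_start:
  assumes "(S a, I a) \<in> phase_dom A" "\<And>t. a < t \<Longrightarrow> t < e \<Longrightarrow> b * S t \<le> \<gamma>" "a \<le> t" "t \<le> e"
  shows "I t \<le> I a"
proof -
  have "I t \<le> I a * exp (0 * (t - a))"
  proof (rule differential_inequality_upper[OF continuous_I deriv_SI(2) _ assms(3,4)])
    fix t assume t: "a < t" "t < e"
    then have "0 \<le> I t" using phase_dom_invariant[OF assms(1)] by (auto simp: phase_dom_def)
    then show "I t * (b * S t - \<gamma>) \<le> 0 * I t" using assms(2)[OF t] by (simp add: mult_nonneg_nonpos)
  qed
  then show ?thesis by simp
qed

lemma I_decay_if_S_0: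
  assumes "S a = 0" "a \<le> t" "t \<le> e"
  shows "I t = I a * exp (- \<gamma> * (t - a))"
proof -
  have rate: "I t * (b * S t - \<gamma>) = - \<gamma> * I t" if "a < t" "t < e" for t
    using S_eq_0[OF assms(1), of t] that by simp
  have "I t \<le> I a * exp (- \<gamma> * (t - a))"
  proof (rule differential_inequality_upper[OF continuous_I deriv_SI(2) _ assms(2,3)])
    fix s assume "a < s" "s < e"
    then show "I s * (b * S s - \<gamma>) \<le> - \<gamma> * I s" using rate[of s] by linarith
  qed
  moreover have "I a * exp (- \<gamma> * (t - a)) \<le> I t"
  proof (rule differential_inequality_lower[OF continuous_I deriv_SI(2) _ assms(2,3)])
    fix s assume "a < s" "s < e"
    then show "- \<gamma> * I s \<le> I s * (b * S s - \<gamma>)" using rate[of s] by linarith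
  qed
  ultimately show ?thesis by simp
qed

lemma deriv_lyapunov:
  assumes "a < t" "t < e" "S t > 0"
  shows "((\<lambda>t. I t * S t powr b * exp (- (b * A - \<gamma>) * (t - a))) has_real_derivative
      - b\<^sup>2 * I t * (I t * S t powr b * exp (- (b * A - \<gamma>) * (t - a)))) (at t)"
proof -
  have "((\<lambda>t. S t powr b) has_real_derivative b * S t powr (b - 1) * (S t * (A - S t - b * I t))) (at t)"
    using DERIV_fun_powr[OF deriv_SI(1)[OF assms(1,2)] assms(3), of b] by simp
  moreover have "S t powr (b - 1) * S t = S t powr b"
    using assms(3) by (simp add: powr_diff)
  ultimately have "((\<lambda>t. S t powr b) has_real_derivative b * (A - S t - b * I t) * S t powr b) (at t)"
    by (simp add: algebra_simps)
  moreover have "((\<lambda>t. exp (- (b * A - \<gamma>) * (t - a))) has_real_derivative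
      exp (- (b * A - \<gamma>) * (t - a)) * (- (b * A - \<gamma>))) (at t)"
    by (auto intro!: derivative_eq_intros)
  ultimately show ?thesis
    by (rule DERIV_cong[OF DERIV_mult[OF DERIV_mult[OF deriv_SI(2)[OF assms(1,2)]]]])
      (simp add: algebra_simps power2_eq_square)
qed

lemma lyapunov_flow_upper:
  assumes "(S a, I a) \<in> phase_dom A" "S a > 0" "a \<le> t" "t \<le> e"
  shows "I t * S t powr b * exp (- (b * A - \<gamma>) * (t - a)) \<le> I a * S a powr b"
proof -
  have "I t * S t powr b * exp (- (b * A - \<gamma>) * (t - a))
      \<le> I a * S a powr b * exp (- (b * A - \<gamma>) * (a - a)) * exp (0 * (t - a))"
  proof (rule differential_inequality_upper[OF _ deriv_lyapunov _ assms(3,4)])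
    show "continuous_on {a..e} (\<lambda>t. I t * S t powr b * exp (- (b * A - \<gamma>) * (t - a)))"
      using S_pos[OF assms(2)]
      by (intro continuous_intros continuous_S continuous_I) force+
    fix t assume t: "a < t" "t < e"
    then show "S t > 0" using S_pos[OF assms(2)] by auto
    have "I t \<ge> 0" using phase_dom_invariant[OF assms(1)] t by (auto simp: phase_dom_def)
    then show "- b\<^sup>2 * I t * (I t * S t powr b * exp (- (b * A - \<gamma>) * (t - a)))
        \<le> 0 * (I t * S t powr b * exp (- (b * A - \<gamma>) * (t - a)))"
      by (simp add: mult_nonneg_nonneg)
  qed
  then show ?thesis by simp
qed

lemma lyapunov_flow_lower:
  assumes "(S a, I a) \<in> phase_dom A" "S a > 0" "\<And>t. a < t \<Longrightarrow> t < e \<Longrightarrow> I t \<le> M"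
    and "a \<le> t" "t \<le> e"
  shows "I a * S a powr b * exp (- (b\<^sup>2 * M) * (t - a))
    \<le> I t * S t powr b * exp (- (b * A - \<gamma>) * (t - a))"
proof -
  have "I a * S a powr b * exp (- (b * A - \<gamma>) * (a - a)) * exp (- (b\<^sup>2 * M) * (t - a))
      \<le> I t * S t powr b * exp (- (b * A - \<gamma>) * (t - a))"
  proof (rule differential_inequality_lower[OF _ deriv_lyapunov _ assms(4,5)])
    show "continuous_on {a..e} (\<lambda>t. I t * S t powr b * exp (- (b * A - \<gamma>) * (t - a)))"
      using S_pos[OF assms(2)]
      by (intro continuous_intros continuous_S continuous_I) force+
    fix t assume t: "a < t" "t < e"
    then show "S t > 0" using S_pos[OF assms(2)] by auto
    have "I t \<ge> 0" using phase_dom_invariant[OF assms(1)] t by (auto simp: phase_dom_def)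
    then have "0 \<le> I t * S t powr b * exp (- (b * A - \<gamma>) * (t - a))" by simp
    then show "- (b\<^sup>2 * M) * (I t * S t powr b * exp (- (b * A - \<gamma>) * (t - a)))
        \<le> - b\<^sup>2 * I t * (I t * S t powr b * exp (- (b * A - \<gamma>) * (t - a)))"
      using assms(3)[OF t] by (simp add: mult_right_mono mult_left_mono)
  qed
  then show ?thesis by simp
qed

end

subsection \<open>Existence of solutions\<close>

text \<open>The field with both coordinates clipped to a box is globally Lipschitz, and its
  solutions starting in the phase space never reach the clipping region.\<close>

definition clipped_vfield :: "real \<Rightarrow> real \<times> real \<Rightarrow> real \<times> real" where
  "clipped_vfield R z = vfield A b sg g (clip A (fst z), clip R (snd z))"

lemma vfield_lipschitz_on_box:
  assumes u: "u \<in> {0..A} \<times> {0..R}" and v: "v \<in> {0..A} \<times> {0..R}"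
  shows "dist (vfield A b sg g u) (vfield A b sg g v) \<le> (2 * A + 2 * b * R + 2 * A * b + \<gamma>) * dist u v"
proof -
  obtain s1 i1 s2 i2 where uv: "u = (s1, i1)" "v = (s2, i2)" by fastforce
  define d where "d = dist u v"
  have ds: "\<bar>s1 - s2\<bar> \<le> d" and di: "\<bar>i1 - i2\<bar> \<le> d"
    using dist_fst_le[of u v] dist_snd_le[of u v] by (simp_all add: uv d_def dist_real_def)
  have s: "0 \<le> s1" "s1 \<le> A" and i: "0 \<le> i1" "i1 \<le> R" "0 \<le> i2" "i2 \<le> R"
    using u v by (auto simp: uv)
  have "\<bar>s1 * (A - s1 - b * i1) - s2 * (A - s2 - b * i2)\<bar>
      \<le> \<bar>s1 - s2\<bar> * (A + b * R) + A * \<bar>(A - s1 - b * i1) - (A - s2 - b * i2)\<bar>"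
  proof (rule abs_mult_diff_le)
    have "0 \<le> b * i1" "b * i1 \<le> b * R" using b_pos i by (auto intro: mult_left_mono)
    then show "\<bar>A - s1 - b * i1\<bar> \<le> A + b * R" using s by linarith
  qed (use v uv in auto)
  also have "\<dots> \<le> d * (A + b * R) + A * (d + b * d)"
  proof (intro add_mono mult_right_mono mult_left_mono)
    have "\<bar>b * (i1 - i2)\<bar> \<le> b * d" using b_pos di by (simp add: abs_mult)
    then show "\<bar>(A - s1 - b * i1) - (A - s2 - b * i2)\<bar> \<le> d + b * d"
      using ds by (simp add: algebra_simps)
  qed (use ds A_pos b_pos i in auto)
  finally have first: "\<bar>s1 * (A - s1 - b * i1) - s2 * (A - s2 - b * i2)\<bar>
      \<le> d * (A + b * R) + A * (d + b * d)" .
  have "\<bar>i1 * (b * s1 - \<gamma>) - i2 * (b * s2 - \<gamma>)\<bar>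
      \<le> \<bar>i1 - i2\<bar> * (b * A + \<gamma>) + R * \<bar>(b * s1 - \<gamma>) - (b * s2 - \<gamma>)\<bar>"
  proof (rule abs_mult_diff_le)
    have "0 \<le> b * s1" "b * s1 \<le> b * A" using b_pos s by (auto intro: mult_left_mono)
    then show "\<bar>b * s1 - \<gamma>\<bar> \<le> b * A + \<gamma>" using sg_g_pos by linarith
  qed (use i in auto)
  also have "\<dots> \<le> d * (b * A + \<gamma>) + R * (b * d)"
  proof (intro add_mono mult_right_mono mult_left_mono)
    show "\<bar>(b * s1 - \<gamma>) - (b * s2 - \<gamma>)\<bar> \<le> b * d"
      using b_pos ds by (simp add: abs_mult flip: right_diff_distrib)
  qed (use di b_pos A_pos sg_g_pos i in auto)
  finally have second: "\<bar>i1 * (b * s1 - \<gamma>) - i2 * (b * s2 - \<gamma>)\<bar> \<le> d * (b * A + \<gamma>) + R * (b * d)" .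
  have "dist (vfield A b sg g u) (vfield A b sg g v)
      \<le> \<bar>s1 * (A - s1 - b * i1) - s2 * (A - s2 - b * i2)\<bar> + \<bar>i1 * (b * s1 - \<gamma>) - i2 * (b * s2 - \<gamma>)\<bar>"
    using dist_le_abs_fst_snd[of "vfield A b sg g u" "vfield A b sg g v"] by (simp add: uv vfield_eq)
  also have "\<dots> \<le> (2 * A + 2 * b * R + 2 * A * b + \<gamma>) * d"
    using first second by (simp add: algebra_simps)
  finally show ?thesis by (simp add: d_def)
qed

lemma clipped_vfield_lipschitz:
  assumes "0 \<le> R"
  shows "dist (clipped_vfield R u) (clipped_vfield R v)
    \<le> (2 * A + 2 * b * R + 2 * A * b + \<gamma>) * dist u v"
proof -
  have "dist (clipped_vfield R u) (clipped_vfield R v)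
      \<le> (2 * A + 2 * b * R + 2 * A * b + \<gamma>) * dist (clip A (fst u), clip R (snd u)) (clip A (fst v), clip R (snd v))"
    unfolding clipped_vfield_def using A_pos assms by (intro vfield_lipschitz_on_box) (auto simp: clip_def)
  also have "\<dots> \<le> (2 * A + 2 * b * R + 2 * A * b + \<gamma>) * dist u v"
    using A_pos b_pos sg_g_pos assms abs_clip_diff_le[of A "fst u" "fst v"] abs_clip_diff_le[of R "snd u" "snd v"]
    unfolding dist_Pair_Pair dist_prod_def dist_real_def
    by (intro mult_left_mono real_sqrt_le_mono add_mono power_mono) auto
  finally show ?thesis .
qed

lemma clipped_solution_bounds:
  assumes R: "0 \<le> R" and cont: "continuous_on {0..T} y"
    and deriv: "\<And>t. 0 < t \<Longrightarrow> t < T \<Longrightarrow> (y has_vector_derivative clipped_vfield R (y t)) (at t)"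
    and start: "y 0 \<in> phase_dom A" and t: "0 \<le> t" "t \<le> T"
  shows "y t \<in> phase_dom A" and "snd (y t) \<le> snd (y 0) * exp (b * A * t)"
proof -
  have cont_S: "continuous_on {0..T} (\<lambda>t. fst (y t))" and cont_I: "continuous_on {0..T} (\<lambda>t. snd (y t))"
    using cont by (auto intro: continuous_on_fst continuous_on_snd)
  note deriv_S = has_real_derivative_fst[OF deriv] and deriv_I = has_real_derivative_snd[OF deriv]
  have S_nonneg: "0 \<le> fst (y t)" if "0 \<le> t" "t \<le> T" for t
    using nonpos_if_deriv_nonpos_where_pos[OF continuous_on_minus[OF cont_S] DERIV_minus[OF deriv_S] _ _ that]
      start by (auto intro: continuous_intros simp: clipped_vfield_def vfield_def clip_def phase_dom_def)
  have I_nonneg: "0 \<le> snd (y t)" if "0 \<le> t" "t \<le> T" for t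
    using nonpos_if_deriv_nonpos_where_pos[OF continuous_on_minus[OF cont_I] DERIV_minus[OF deriv_I] _ _ that]
      start by (auto intro: continuous_intros simp: clipped_vfield_def vfield_def clip_def phase_dom_def)
  have S_le_A: "fst (y t) \<le> A" if "0 \<le> t" "t \<le> T" for t
  proof -
    have "fst (y t) - A \<le> 0"
    proof (rule nonpos_if_deriv_nonpos_where_pos[OF _ DERIV_diff[OF deriv_S DERIV_const] _ _ that])
      fix s assume "0 < s" "s < T" "0 < fst (y s) - A"
      moreover have "0 \<le> clip R (snd (y s))" by (simp add: clip_def)
      ultimately show "fst (clipped_vfield R (y s)) - 0 \<le> 0"
        using A_pos b_pos by (simp add: clipped_vfield_def vfield_def clip_def)
    qed (use cont_S start in \<open>auto intro: continuous_intros simp: phase_dom_def\<close>)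
    then show ?thesis by simp
  qed
  show "y t \<in> phase_dom A" using S_nonneg S_le_A I_nonneg t by (simp add: phase_dom_def)
  have "snd (y t) \<le> snd (y 0) * exp (b * A * (t - 0))"
  proof (rule differential_inequality_upper[OF cont_I deriv_I _ t])
    fix s assume s: "0 < s" "s < T"
    define i where "i = clip R (snd (y s))"
    have "0 \<le> i" "i \<le> snd (y s)" using I_nonneg s R by (auto simp: i_def clip_def)
    have "0 \<le> b * fst (y s)" "b * fst (y s) \<le> b * A"
      using S_nonneg[of s] S_le_A[of s] s b_pos by (auto intro: mult_left_mono)
    then have "i * (b * fst (y s) - \<gamma>) \<le> snd (y s) * (b * A)"
      using \<open>0 \<le> i\<close> \<open>i \<le> snd (y s)\<close> sg_g_pos
      by (smt (verit) mult_left_mono mult_right_mono mult_nonneg_nonpos)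
    moreover have "clip A (fst (y s)) = fst (y s)" using S_nonneg S_le_A s by (simp add: clip_def)
    ultimately show "snd (clipped_vfield R (y s)) \<le> b * A * snd (y s)"
      by (simp add: clipped_vfield_def vfield_def i_def algebra_simps)
  qed
  then show "snd (y t) \<le> snd (y 0) * exp (b * A * t)" by simp
qed

lemma solves_on_exists:
  assumes "x0 \<in> phase_dom A"
  shows "\<exists>y. solves_on 0 T y \<and> y 0 = x0"
proof -
  define R where "R = snd x0 * exp (b * A * T) + 1"
  have R: "0 \<le> R" using assms by (simp add: R_def phase_dom_def)
  have "0 < 2 * A + 2 * b * R + 2 * A * b + \<gamma>"
    using A_pos b_pos sg_g_pos R by (simp add: add_pos_nonneg)
  from lipschitz_ode_solution_exists[OF this clipped_vfield_lipschitz[OF R] less_imp_le[OF T_pos]]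
  obtain y where y: "continuous_on {0..T} y" "y 0 = x0"
    and deriv: "\<And>t. 0 < t \<Longrightarrow> t < T \<Longrightarrow> (y has_vector_derivative clipped_vfield R (y t)) (at t)"
    by blast
  have "clipped_vfield R (y t) = vfield A b sg g (y t)" if "0 < t" "t < T" for t
  proof -
    note bounds = clipped_solution_bounds[OF R y(1) deriv _ less_imp_le[OF that(1)] less_imp_le[OF that(2)]]
    have "snd x0 * exp (b * A * t) \<le> snd x0 * exp (b * A * T)"
      using assms that b_pos A_pos by (auto simp: phase_dom_def intro!: mult_left_mono)
    then have "snd (y t) < R" using bounds(2) assms y(2) by (simp add: R_def)
    then show ?thesis
      using bounds(1) assms y(2) by (simp add: clipped_vfield_def clip_def phase_dom_def)
  qed
  then have "solves_on 0 T y" using y(1) deriv by (simp add: solves_on_def)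
  then show ?thesis using y(2) by blast
qed

lemma period_index: "real k * T \<le> t \<Longrightarrow> t < real (Suc k) * T \<Longrightarrow> \<lfloor>t / T\<rfloor> = int k"
proof -
  assume "real k * T \<le> t" "t < real (Suc k) * T"
  then have "real k \<le> t / T" "t / T < real k + 1" using T_pos by (auto simp: field_simps)
  then show ?thesis by (simp add: floor_eq_iff)
qed

lemma in_period:
  assumes "0 \<le> t"
  shows "real (nat \<lfloor>t / T\<rfloor>) * T \<le> t" "t < real (Suc (nat \<lfloor>t / T\<rfloor>)) * T"
proof -
  have "real (nat \<lfloor>t / T\<rfloor>) = of_int \<lfloor>t / T\<rfloor>" using assms T_pos by simp
  moreover have "of_int \<lfloor>t / T\<rfloor> * T \<le> t" "t < (of_int \<lfloor>t / T\<rfloor> + 1) * T"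
    using T_pos by (simp_all add: pos_le_divide_eq[symmetric] pos_divide_less_eq[symmetric])
  ultimately show "real (nat \<lfloor>t / T\<rfloor>) * T \<le> t" "t < real (Suc (nat \<lfloor>t / T\<rfloor>)) * T"
    by (simp_all add: algebra_simps)
qed

lemma period_length: "real (Suc k) * T - real k * T = T"
  by (simp add: algebra_simps)

lemma period_less: "real k * T < real (Suc k) * T"
  using T_pos by (simp add: algebra_simps)

lemma solution_on_period:
  assumes "is_solution A b sg g p T x"
  obtains S I where "solves_on (real k * T) (real (Suc k) * T) (\<lambda>t. (S t, I t))"
    and "\<And>t. real k * T \<le> t \<Longrightarrow> t < real (Suc k) * T \<Longrightarrow> x t = (S t, I t)"
    and "x (real (Suc k) * T) = ((1 - p) * S (real (Suc k) * T), I (real (Suc k) * T))"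
    and "x (real k * T) = (S (real k * T), I (real k * T))"
proof -
  define a e where "a = real k * T" and "e = real (Suc k) * T"
  have "a < e" using period_less by (simp add: a_def e_def)
  obtain L where L: "(x \<longlongrightarrow> L) (at_left e)" "x e = ((1 - p) * fst L, snd L)"
    using assms unfolding is_solution_def e_def by (metis le_add1 plus_1_eq_Suc)
  have right: "(x \<longlongrightarrow> x a) (at_right a)" using assms unfolding is_solution_def a_def by blast
  have deriv: "(x has_vector_derivative vfield A b sg g (x t)) (at t)" if "a < t" "t < e" for t
    using assms that unfolding is_solution_def a_def e_def by blast
  define y where "y t = (if t < e then x t else L)" for t
  have y_x: "y t = x t" if "t < e" for t using that by (simp add: y_def)
  have "continuous_on {a..e} y"
  proof (rule continuous_on_IccI[OF _ _ _ \<open>a < e\<close>])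
    have "eventually (\<lambda>t. x t = y t) (at_right a)"
      unfolding eventually_at_right_field using \<open>a < e\<close> by (auto intro!: exI[of _ e] simp: y_x)
    then show "(y \<longlongrightarrow> y a) (at_right a)"
      using tendsto_cong right y_x[OF \<open>a < e\<close>] by fastforce
    have "eventually (\<lambda>t. x t = y t) (at_left e)"
      unfolding eventually_at_left_field using \<open>a < e\<close> by (auto intro!: exI[of _ a] simp: y_x)
    then show "(y \<longlongrightarrow> y e) (at_left e)"
      using tendsto_cong L(1) by (fastforce simp: y_def)
    fix t assume t: "a < t" "t < e"
    then have "(x \<longlongrightarrow> y t) (at t)"
      using has_vector_derivative_continuous[OF deriv[OF t]] by (simp add: isCont_def y_x)
    then show "(y \<longlongrightarrow> y t) (at t)"
      by (rule Lim_transform_within_open[where s="{..<e}"]) (use t in \<open>auto simp: y_x\<close>)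
  qed
  moreover have "(y has_vector_derivative vfield A b sg g (y t)) (at t)" if "a < t" "t < e" for t
    using has_vector_derivative_transform_within_open[OF deriv[OF that], of "{..<e}" y] that
    by (auto simp: y_x)
  ultimately have "solves_on a e (\<lambda>t. (fst (y t), snd (y t)))" by (simp add: solves_on_def)
  moreover have "x e = ((1 - p) * fst (y e), snd (y e))" using L(2) by (simp add: y_def)
  ultimately show ?thesis using that[of "\<lambda>t. fst (y t)" "\<lambda>t. snd (y t)"] y_x \<open>a < e\<close>
    unfolding a_def e_def by simp
qed

lemma is_solution_from_pieces:
  assumes sol: "\<And>k. solves_on 0 T (z k)"
    and x: "\<And>k t. real k * T \<le> t \<Longrightarrow> t < real (Suc k) * T \<Longrightarrow> x t = z k (t - real k * T)"
    and jump: "\<And>k. z (Suc k) 0 = ((1 - p) * fst (z k T), snd (z k T))"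
  shows "is_solution A b sg g p T x"
  unfolding is_solution_def
proof (intro conjI allI impI)
  have lim: "((\<lambda>t. z k (t - real k * T)) \<longlongrightarrow> z k 0) (at_right (real k * T))"
    "((\<lambda>t. z k (t - real k * T)) \<longlongrightarrow> z k T) (at_left (real (Suc k) * T))" for k
    using continuous_on_shift_limits[of T "z k" "real k * T"] sol[of k] T_pos
    by (simp_all add: solves_on_def algebra_simps)
  fix n :: nat
  show "(x \<longlongrightarrow> x (real n * T)) (at_right (real n * T))"
  proof (rule Lim_transform_eventually)
    show "((\<lambda>t. z n (t - real n * T)) \<longlongrightarrow> x (real n * T)) (at_right (real n * T))"
      using lim(1)[of n] period_less[of n] x[of n "real n * T"] by simp
    show "\<forall>\<^sub>F t in at_right (real n * T). z n (t - real n * T) = x t"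
      unfolding eventually_at_right_field using period_less[of n]
      by (intro exI[of _ "real (Suc n) * T"]) (simp add: x[of n])
  qed
  assume "1 \<le> n"
  then obtain k where n: "n = Suc k" using not0_implies_Suc by fastforce
  have "(x \<longlongrightarrow> z k T) (at_left (real n * T))"
  proof (rule Lim_transform_eventually)
    show "((\<lambda>t. z k (t - real k * T)) \<longlongrightarrow> z k T) (at_left (real n * T))"
      using lim(2)[of k] unfolding n .
    show "\<forall>\<^sub>F t in at_left (real n * T). z k (t - real k * T) = x t"
      unfolding eventually_at_left_field n using period_less[of k]
      by (intro exI[of _ "real k * T"]) (simp add: x[of k])
  qed
  moreover have "x (real n * T) = ((1 - p) * fst (z k T), snd (z k T))"
    using x[of n "real n * T"] period_less[of n] jump[of k] by (simp add: n)
  ultimately show "\<exists>L. (x \<longlongrightarrow> L) (at_left (real n * T)) \<and> x (real n * T) = ((1 - p) * fst L, snd L)"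
    by blast
next
  fix n :: nat and t assume t: "real n * T < t \<and> t < real (Suc n) * T"
  then have "(z n has_vector_derivative vfield A b sg g (z n (t - real n * T))) (at (t - real n * T))"
    using sol[of n] by (simp add: solves_on_def algebra_simps)
  moreover have "((\<lambda>t. t - real n * T) has_vector_derivative 1) (at t)"
    by (auto intro!: derivative_eq_intros simp flip: has_real_derivative_iff_has_vector_derivative)
  ultimately have "((\<lambda>t. z n (t - real n * T)) has_vector_derivative vfield A b sg g (x t)) (at t)"
    using vector_diff_chain_at[of "\<lambda>t. t - real n * T" 1 t "z n"] x[of n t] t by (simp add: o_def)
  then show "(x has_vector_derivative vfield A b sg g (x t)) (at t)"
    by (rule has_vector_derivative_transform_within_open[where S="{real n * T<..<real (Suc n) * T}"])
      (use t x[of n] in auto)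
qed

lemma is_solution_exists:
  assumes "x0 \<in> phase_dom A"
  shows "\<exists>x. is_solution A b sg g p T x \<and> x 0 = x0"
proof -
  obtain F where F: "\<And>d. d \<in> phase_dom A \<Longrightarrow> solves_on 0 T (F d) \<and> F d 0 = d"
    using solves_on_exists by metis
  define start where "start = rec_nat x0 (\<lambda>_ z. ((1 - p) * fst (F z T), snd (F z T)))"
  have start_Suc: "start (Suc k) = ((1 - p) * fst (F (start k) T), snd (F (start k) T))" for k
    by (simp add: start_def)
  have start: "start k \<in> phase_dom A" for k
  proof (induction k)
    case 0
    then show ?case using assms by (simp add: start_def)
  next
    case (Suc k)
    then have "solves_on 0 T (\<lambda>t. (fst (F (start k) t), snd (F (start k) t)))" using F by simp
    from phase_dom_invariant[OF this] have "F (start k) T \<in> phase_dom A"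
      using Suc F T_pos by fastforce
    then show ?case
      using p_pos p_less_1 by (auto simp: start_Suc phase_dom_def intro: order.trans[OF mult_left_le_one_le])
  qed
  define x where "x t = F (start (nat \<lfloor>t / T\<rfloor>)) (t - real (nat \<lfloor>t / T\<rfloor>) * T)" for t
  have "is_solution A b sg g p T x"
  proof (rule is_solution_from_pieces[where z="\<lambda>k. F (start k)"])
    show "solves_on 0 T (F (start k))" for k using F start by blast
    show "x t = F (start k) (t - real k * T)" if "real k * T \<le> t" "t < real (Suc k) * T" for k t
      using period_index[OF that] by (simp add: x_def)
    show "F (start (Suc k)) 0 = ((1 - p) * fst (F (start k) T), snd (F (start k) T))" for k
      using F[OF start[of "Suc k"]] by (simp add: start_Suc)
  qed
  moreover have "x 0 = x0" using F assms by (simp add: x_def start_def)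
  ultimately show ?thesis by blast
qed

lemma solution_phase_dom_step:
  assumes "is_solution A b sg g p T x" "x (real k * T) \<in> phase_dom A"
  shows "x (real (Suc k) * T) \<in> phase_dom A"
proof -
  obtain S I where sol: "solves_on (real k * T) (real (Suc k) * T) (\<lambda>t. (S t, I t))"
    and jump: "x (real (Suc k) * T) = ((1 - p) * S (real (Suc k) * T), I (real (Suc k) * T))"
    and start: "x (real k * T) = (S (real k * T), I (real k * T))"
    using solution_on_period[OF assms(1), of k] by blast
  have "(S (real (Suc k) * T), I (real (Suc k) * T)) \<in> phase_dom A"
    using phase_dom_invariant[OF sol] assms(2) start period_less[of k] by simp
  then show ?thesis
    using jump p_pos p_less_1
    by (auto simp: phase_dom_def intro: order.trans[OF mult_left_le_one_le])
qed

lemma solution_phase_dom: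
  assumes "is_solution A b sg g p T x" "x 0 \<in> phase_dom A"
  shows "x (real k * T) \<in> phase_dom A"
  by (induction k) (use assms solution_phase_dom_step in auto)

definition \<alpha> :: real where "\<alpha> = exp (- A * T) / (1 - p)"
definition \<beta> :: real where "\<beta> = (1 - exp (- A * T)) / (A * (1 - p))"

text \<open>While 0 \<le> I \<le> M, the function 1 / S lies between the solutions of the linear equations
  z' = - A' * (z - 1 / A') with A' = A and A' = A - b * M; inverse_S_map M is the resulting
  period map for 1 / S, impulse included.\<close>

definition inverse_S_map :: "real \<Rightarrow> real \<Rightarrow> real" where
  "inverse_S_map M z = (1 / (A - b * M) + (z - 1 / (A - b * M)) * exp (- (A - b * M) * T)) / (1 - p)"

lemma inverse_S_map_0: "inverse_S_map 0 z = \<alpha> * z + \<beta>"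
proof -
  have "1 / A + (z - 1 / A) * exp (- A * T) = exp (- A * T) * z + (1 - exp (- A * T)) / A"
    by (simp add: algebra_simps diff_divide_distrib)
  then show ?thesis by (simp add: inverse_S_map_def \<alpha>_def \<beta>_def add_divide_distrib)
qed

lemma \<alpha>_pos: "0 < \<alpha>"
  using p_less_1 by (simp add: \<alpha>_def)

lemma inverse_S_map_mono: "z \<le> z' \<Longrightarrow> inverse_S_map M z \<le> inverse_S_map M z'"
  unfolding inverse_S_map_def using p_less_1 by (intro divide_right_mono add_left_mono mult_right_mono) auto

lemma inverse_S_step_lower:
  assumes "is_solution A b sg g p T x" "x (real k * T) \<in> phase_dom A" "fst (x (real k * T)) > 0"
  shows "fst (x (real (Suc k) * T)) > 0"
    and "\<alpha> * (1 / fst (x (real k * T))) + \<beta> \<le> 1 / fst (x (real (Suc k) * T))"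
proof -
  obtain S I where sol: "solves_on (real k * T) (real (Suc k) * T) (\<lambda>t. (S t, I t))"
    and jump: "x (real (Suc k) * T) = ((1 - p) * S (real (Suc k) * T), I (real (Suc k) * T))"
    and start: "x (real k * T) = (S (real k * T), I (real k * T))"
    using solution_on_period[OF assms(1), of k] by blast
  have S0: "S (real k * T) > 0" and I0: "I (real k * T) \<ge> 0"
    using assms(2,3) start by (auto simp: phase_dom_def)
  show "fst (x (real (Suc k) * T)) > 0"
    using S_pos[OF sol S0] period_less[of k] jump p_less_1 by simp
  have "1 / A + (1 / S (real k * T) - 1 / A) * exp (- A * T) \<le> 1 / S (real (Suc k) * T)"
    using inverse_S_lower[OF sol S0 I0, of "real (Suc k) * T", unfolded period_length] period_less[of k]
    by simp
  then have "inverse_S_map 0 (1 / S (real k * T)) \<le> 1 / S (real (Suc k) * T) / (1 - p)"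
    unfolding inverse_S_map_def using p_less_1 by (intro divide_right_mono) auto
  then show "\<alpha> * (1 / fst (x (real k * T))) + \<beta> \<le> 1 / fst (x (real (Suc k) * T))"
    using start jump by (simp add: inverse_S_map_0 mult.commute)
qed

lemma inverse_S_step_upper:
  assumes "is_solution A b sg g p T x" "fst (x (real k * T)) > 0"
    and "b * M < A" "\<And>t. real k * T < t \<Longrightarrow> t < real (Suc k) * T \<Longrightarrow> snd (x t) \<le> M"
  shows "1 / fst (x (real (Suc k) * T)) \<le> inverse_S_map M (1 / fst (x (real k * T)))"
proof -
  obtain S I where sol: "solves_on (real k * T) (real (Suc k) * T) (\<lambda>t. (S t, I t))"
    and x: "\<And>t. real k * T \<le> t \<Longrightarrow> t < real (Suc k) * T \<Longrightarrow> x t = (S t, I t)"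
    and jump: "x (real (Suc k) * T) = ((1 - p) * S (real (Suc k) * T), I (real (Suc k) * T))"
    and start: "x (real k * T) = (S (real k * T), I (real k * T))"
    using solution_on_period[OF assms(1), of k] by blast
  have S0: "S (real k * T) > 0" using assms(2) start by simp
  have "\<And>t. real k * T < t \<Longrightarrow> t < real (Suc k) * T \<Longrightarrow> I t \<le> M"
    using assms(4) x by fastforce
  from inverse_S_upper[OF sol S0 assms(3) this, of "real (Suc k) * T", unfolded period_length]
  have "1 / S (real (Suc k) * T)
      \<le> 1 / (A - b * M) + (1 / S (real k * T) - 1 / (A - b * M)) * exp (- (A - b * M) * T)"
    using period_less[of k] by simp
  then have "1 / S (real (Suc k) * T) / (1 - p) \<le> inverse_S_map M (1 / S (real k * T))"
    unfolding inverse_S_map_def using p_less_1 by (intro divide_right_mono) auto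
  then show ?thesis using start jump by (simp add: mult.commute)
qed

lemma I_bound_on_period:
  assumes "is_solution A b sg g p T x" "x (real k * T) \<in> phase_dom A"
    and "real k * T \<le> t" "t < real (Suc k) * T"
  shows "snd (x t) \<le> snd (x (real k * T)) * exp (b * A * T)"
proof -
  obtain S I where sol: "solves_on (real k * T) (real (Suc k) * T) (\<lambda>t. (S t, I t))"
    and x: "\<And>t. real k * T \<le> t \<Longrightarrow> t < real (Suc k) * T \<Longrightarrow> x t = (S t, I t)"
    and start: "x (real k * T) = (S (real k * T), I (real k * T))"
    using solution_on_period[OF assms(1), of k] by blast
  have "I t \<le> I (real k * T) * exp (b * A * (t - real k * T))"
    using I_le_exp[OF sol] assms(2-4) start by simp
  also have "\<dots> \<le> I (real k * T) * exp (b * A * T)"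
    using assms(2,4) start b_pos A_pos period_length[of k]
    by (intro mult_left_mono) (auto simp: phase_dom_def)
  finally show ?thesis using x[OF assms(3,4)] start by simp
qed

text \<open>exp \<mu> = (1 - p) powr b * exp ((b * A - \<gamma>) * T) is the factor by which the impulse and the
  drift term change I * S powr b over one period.\<close>

definition \<mu> :: real where "\<mu> = (b * A - \<gamma>) * T + b * ln (1 - p)"

lemma lyapunov_step:
  assumes "is_solution A b sg g p T x" "x (real k * T) \<in> phase_dom A" "fst (x (real k * T)) > 0"
  shows "snd (x (real (Suc k) * T)) * fst (x (real (Suc k) * T)) powr b
      \<le> exp \<mu> * (snd (x (real k * T)) * fst (x (real k * T)) powr b)"
    and "(\<And>t. real k * T < t \<Longrightarrow> t < real (Suc k) * T \<Longrightarrow> snd (x t) \<le> M) \<Longrightarrow>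
      exp (\<mu> - b\<^sup>2 * M * T) * (snd (x (real k * T)) * fst (x (real k * T)) powr b)
      \<le> snd (x (real (Suc k) * T)) * fst (x (real (Suc k) * T)) powr b"
proof -
  obtain S I where sol: "solves_on (real k * T) (real (Suc k) * T) (\<lambda>t. (S t, I t))"
    and x: "\<And>t. real k * T \<le> t \<Longrightarrow> t < real (Suc k) * T \<Longrightarrow> x t = (S t, I t)"
    and jump: "x (real (Suc k) * T) = ((1 - p) * S (real (Suc k) * T), I (real (Suc k) * T))"
    and start: "x (real k * T) = (S (real k * T), I (real k * T))"
    using solution_on_period[OF assms(1), of k] by blast
  define a e where "a = real k * T" and "e = real (Suc k) * T"
  have ae: "a \<le> e" "e - a = T" using period_less[of k] period_length[of k] by (auto simp: a_def e_def)
  have S0: "S a > 0" and pd: "(S a, I a) \<in> phase_dom A"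
    using assms(2,3) start by (auto simp: a_def)
  have "S e > 0" using S_pos[OF sol] S0 ae by (simp add: a_def e_def)
  define c where "c = (b * A - \<gamma>) * T"
  have "((1 - p) * S e) powr b = (1 - p) powr b * S e powr b"
    using p_less_1 \<open>S e > 0\<close> by (simp add: powr_mult)
  then have "snd (x e) * fst (x e) powr b = (1 - p) powr b * (I e * S e powr b)"
    using jump by (simp add: e_def)
  also have "\<dots> = (1 - p) powr b * exp c * (I e * S e powr b * exp (- c))"
    by (simp add: exp_minus)
  also have "(1 - p) powr b * exp c = exp \<mu>"
    using p_less_1 by (simp add: \<mu>_def c_def powr_def exp_add mult.commute)
  finally have next_eq: "snd (x e) * fst (x e) powr b
      = exp \<mu> * (I e * S e powr b * exp (- (b * A - \<gamma>) * T))"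
    by (simp only: c_def mult_minus_left)
  have "I e * S e powr b * exp (- (b * A - \<gamma>) * T) \<le> I a * S a powr b"
    using lyapunov_flow_upper[OF sol[folded a_def e_def] pd S0 ae(1) order_refl] ae(2) by simp
  then show "snd (x e) * fst (x e) powr b \<le> exp \<mu> * (snd (x a) * fst (x a) powr b)"
    unfolding next_eq using start by (simp add: a_def)
  assume "\<And>t. a < t \<Longrightarrow> t < e \<Longrightarrow> snd (x t) \<le> M"
  then have "\<And>t. a < t \<Longrightarrow> t < e \<Longrightarrow> I t \<le> M" using x by (fastforce simp: a_def e_def)
  from lyapunov_flow_lower[OF sol[folded a_def e_def] pd S0 this ae(1) order_refl]
  have "I a * S a powr b * exp (- (b\<^sup>2 * M) * T) \<le> I e * S e powr b * exp (- (b * A - \<gamma>) * T)"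
    using ae(2) by simp
  then have "exp \<mu> * (I a * S a powr b * exp (- (b\<^sup>2 * M) * T))
      \<le> snd (x e) * fst (x e) powr b"
    unfolding next_eq by (rule mult_left_mono) simp
  then show "exp (\<mu> - b\<^sup>2 * M * T) * (snd (x a) * fst (x a) powr b) \<le> snd (x e) * fst (x e) powr b"
    using start by (simp add: a_def exp_diff exp_minus field_simps)
qed

lemma S_zero_step:
  assumes "is_solution A b sg g p T x" "fst (x (real k * T)) = 0"
  shows "fst (x (real (Suc k) * T)) = 0"
    and "snd (x (real (Suc k) * T)) = snd (x (real k * T)) * exp (- \<gamma> * T)"
    and "\<And>t. real k * T \<le> t \<Longrightarrow> t < real (Suc k) * T \<Longrightarrow>
      x t = (0, snd (x (real k * T)) * exp (- \<gamma> * (t - real k * T)))"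
proof -
  obtain S I where sol: "solves_on (real k * T) (real (Suc k) * T) (\<lambda>t. (S t, I t))"
    and x: "\<And>t. real k * T \<le> t \<Longrightarrow> t < real (Suc k) * T \<Longrightarrow> x t = (S t, I t)"
    and jump: "x (real (Suc k) * T) = ((1 - p) * S (real (Suc k) * T), I (real (Suc k) * T))"
    and start: "x (real k * T) = (S (real k * T), I (real k * T))"
    using solution_on_period[OF assms(1), of k] by blast
  have S0: "S (real k * T) = 0" using assms(2) start by simp
  have e: "real k * T \<le> real (Suc k) * T" using period_less[of k] by simp
  show "fst (x (real (Suc k) * T)) = 0"
    using S_eq_0[OF sol S0 e order_refl] jump by simp
  show "snd (x (real (Suc k) * T)) = snd (x (real k * T)) * exp (- \<gamma> * T)"
    using I_decay_if_S_0[OF sol S0 e order_refl, unfolded period_length] jump start by simp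
  fix t assume t: "real k * T \<le> t" "t < real (Suc k) * T"
  then show "x t = (0, snd (x (real k * T)) * exp (- \<gamma> * (t - real k * T)))"
    using S_eq_0[OF sol S0, of t] I_decay_if_S_0[OF sol S0, of t] x[OF t] start by simp
qed

lemma I_zero_step:
  assumes "is_solution A b sg g p T x" "snd (x (real k * T)) = 0"
  shows "snd (x (real (Suc k) * T)) = 0"
    and "\<And>t. real k * T \<le> t \<Longrightarrow> t < real (Suc k) * T \<Longrightarrow> snd (x t) = 0"
proof -
  obtain S I where sol: "solves_on (real k * T) (real (Suc k) * T) (\<lambda>t. (S t, I t))"
    and x: "\<And>t. real k * T \<le> t \<Longrightarrow> t < real (Suc k) * T \<Longrightarrow> x t = (S t, I t)"
    and jump: "x (real (Suc k) * T) = ((1 - p) * S (real (Suc k) * T), I (real (Suc k) * T))"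
    and start: "x (real k * T) = (S (real k * T), I (real k * T))"
    using solution_on_period[OF assms(1), of k] by blast
  have "I (real k * T) = 0" using assms(2) start by simp
  note I_zero = I_eq_0[OF sol this]
  show "snd (x (real (Suc k) * T)) = 0"
    using I_zero[of "real (Suc k) * T"] period_less[of k] jump by simp
  show "snd (x t) = 0" if "real k * T \<le> t" "t < real (Suc k) * T" for t
    using I_zero[of t] x[OF that] that by simp
qed

lemma small_S_step:
  assumes "is_solution A b sg g p T x" "x (real k * T) \<in> phase_dom A"
    and "b * (fst (x (real k * T)) * exp (A * T)) \<le> \<gamma>"
  shows "snd (x (real (Suc k) * T)) \<le> snd (x (real k * T))"
    and "fst (x (real (Suc k) * T)) \<le> (1 - p) * exp (A * T) * fst (x (real k * T))"
proof -
  obtain S I where sol: "solves_on (real k * T) (real (Suc k) * T) (\<lambda>t. (S t, I t))"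
    and jump: "x (real (Suc k) * T) = ((1 - p) * S (real (Suc k) * T), I (real (Suc k) * T))"
    and start: "x (real k * T) = (S (real k * T), I (real k * T))"
    using solution_on_period[OF assms(1), of k] by blast
  have pd: "(S (real k * T), I (real k * T)) \<in> phase_dom A" using assms(2) start by simp
  have S_bound: "S t \<le> S (real k * T) * exp (A * T)" if "real k * T \<le> t" "t \<le> real (Suc k) * T" for t
  proof -
    have "S t \<le> S (real k * T) * exp (A * (t - real k * T))" using S_le_exp[OF sol pd that] .
    also have "\<dots> \<le> S (real k * T) * exp (A * T)"
      using that pd A_pos period_length[of k] by (intro mult_left_mono) (auto simp: phase_dom_def)
    finally show ?thesis .
  qed
  have "I (real (Suc k) * T) \<le> I (real k * T)"
  proof (rule I_le_start[OF sol pd _ _ order_refl])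
    fix t assume "real k * T < t" "t < real (Suc k) * T"
    then have "b * S t \<le> b * (S (real k * T) * exp (A * T))"
      using S_bound[of t] b_pos by (intro mult_left_mono) auto
    then show "b * S t \<le> \<gamma>" using assms(3) start by simp
  qed (use period_less[of k] in auto)
  then show "snd (x (real (Suc k) * T)) \<le> snd (x (real k * T))" using start jump by simp
  have "(1 - p) * S (real (Suc k) * T) \<le> (1 - p) * (S (real k * T) * exp (A * T))"
    using S_bound[of "real (Suc k) * T"] period_less[of k] p_less_1 by (intro mult_left_mono) auto
  then show "fst (x (real (Suc k) * T)) \<le> (1 - p) * exp (A * T) * fst (x (real k * T))"
    using start jump by (simp add: algebra_simps)
qed

subsection \<open>Stability\<close>

lemma is_stableI:
  assumes x0: "x0 \<in> phase_dom A"
    and close: "\<And>e. 0 < e \<Longrightarrow> \<exists>\<eta>>0. \<eta> \<le> e \<and> (\<forall>x. is_solution A b sg g p T x \<and> x 0 \<in> phase_dom A \<and>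
      dist x0 (x 0) < \<eta> \<longrightarrow> (\<forall>k. dist x0 (x (real k * T)) < e))"
  shows "is_stable A b sg g p T x0"
  unfolding is_stable_def
proof (intro allI impI)
  fix V assume "nbhd A x0 V"
  then obtain e where e: "e > 0" "\<And>z. z \<in> phase_dom A \<Longrightarrow> dist x0 z < e \<Longrightarrow> z \<in> V"
    using nbhd_obtain_ball by blast
  then obtain \<eta> where \<eta>: "0 < \<eta>" "\<eta> \<le> e" and
    stays: "\<And>x k. is_solution A b sg g p T x \<Longrightarrow> x 0 \<in> phase_dom A \<Longrightarrow> dist x0 (x 0) < \<eta> \<Longrightarrow>
      dist x0 (x (real k * T)) < e"
    using close by meson
  define W where "W = phase_dom A \<inter> ball x0 \<eta>"
  have "nbhd A x0 W" unfolding W_def using x0 \<eta>(1) by (rule nbhd_phase_dom_ball)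
  moreover have "W \<subseteq> V" using e(2) \<eta>(2) by (auto simp: W_def)
  moreover have "x (real k * T) \<in> V" if "is_solution A b sg g p T x" "x 0 \<in> W" for x k
    using that stays[OF that(1)] e(2) solution_phase_dom[OF that(1)] by (simp add: W_def)
  ultimately show "\<exists>W. nbhd A x0 W \<and> W \<subseteq> V \<and>
      (\<forall>x. is_solution A b sg g p T x \<and> x 0 \<in> W \<longrightarrow> (\<forall>k. x (real k * T) \<in> V))"
    by blast
qed

lemma not_is_stableI:
  assumes x0: "x0 \<in> phase_dom A" and e: "0 < e"
    and escape: "\<And>\<eta>. 0 < \<eta> \<Longrightarrow> \<exists>x. is_solution A b sg g p T x \<and> x 0 \<in> phase_dom A \<and>
      dist x0 (x 0) < \<eta> \<and> (\<exists>k. e \<le> dist x0 (x (real k * T)))"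
  shows "\<not> is_stable A b sg g p T x0"
proof -
  have "nbhd A x0 (phase_dom A \<inter> ball x0 e)" using x0 e by (rule nbhd_phase_dom_ball)
  moreover have "\<exists>x. is_solution A b sg g p T x \<and> x 0 \<in> W \<and> (\<exists>k. x (real k * T) \<notin> phase_dom A \<inter> ball x0 e)"
    if W: "nbhd A x0 W" for W
  proof -
    obtain \<eta> where "\<eta> > 0" and W_ball: "\<And>z. z \<in> phase_dom A \<Longrightarrow> dist x0 z < \<eta> \<Longrightarrow> z \<in> W"
      using nbhd_obtain_ball[OF W] by blast
    then obtain x k where "is_solution A b sg g p T x" "x 0 \<in> phase_dom A" "dist x0 (x 0) < \<eta>"
      "e \<le> dist x0 (x (real k * T))"
      using escape by blast
    then show ?thesis using W_ball by (intro exI[of _ x]) (auto intro!: exI[of _ k])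
  qed
  ultimately show ?thesis unfolding is_stable_def by blast
qed

lemma periodic_solution_trivial:
  assumes E: "(1 - p) * exp (A * T) < 1"
    and x: "is_solution A b sg g p T x" "x 0 \<in> phase_dom A" and periodic: "is_T_periodic T x"
    and t: "0 \<le> t"
  shows "x t = (0, 0)"
proof -
  have xT: "x (real (Suc 0) * T) = x (real 0 * T)"
    using periodic[unfolded is_T_periodic_def, rule_format, of 0] by simp
  have pd0: "x (real 0 * T) \<in> phase_dom A" using x(2) by simp
  have S0: "fst (x (real 0 * T)) = 0"
  proof (rule ccontr)
    assume "fst (x (real 0 * T)) \<noteq> 0"
    then have "fst (x (real 0 * T)) > 0" using pd0 by (auto simp: phase_dom_def)
    define z where "z = 1 / fst (x (real 0 * T))"
    have "z > 0" using \<open>fst (x (real 0 * T)) > 0\<close> by (simp add: z_def)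
    have "\<alpha> * z + \<beta> \<le> z"
      using inverse_S_step_lower(2)[OF x(1) pd0 \<open>fst (x (real 0 * T)) > 0\<close>] xT by (simp add: z_def)
    moreover have "\<beta> > 0" using A_pos T_pos p_less_1 by (simp add: \<beta>_def)
    ultimately have "\<alpha> < 1" using \<open>z > 0\<close> by (smt (verit) mult_le_cancel_right1)
    then have "exp (- A * T) < 1 - p" using p_less_1 by (simp add: \<alpha>_def)
    then have "exp (- A * T) * exp (A * T) < (1 - p) * exp (A * T)" by simp
    then show False using E by (simp flip: exp_add)
  qed
  have S: "fst (x (real k * T)) = 0" for k
    by (induction k) (use S0 S_zero_step(1)[OF x(1)] in auto)
  have "- \<gamma> * T < 0" using mult_pos_pos[OF sg_g_pos T_pos] by linarith
  then have "exp (- \<gamma> * T) < 1" by simp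
  then have I0: "snd (x (real 0 * T)) = 0"
    using S_zero_step(2)[OF x(1) S0] xT by (metis mult.right_neutral mult_cancel_left order.irrefl)
  have I: "snd (x (real k * T)) = 0" for k
    by (induction k) (use I0 S_zero_step(2)[OF x(1) S] in auto)
  show ?thesis using S_zero_step(3)[OF x(1) S] I in_period[OF t] by simp
qed

lemma near_origin_le_start:
  assumes E: "(1 - p) * exp (A * T) \<le> 1"
    and x: "is_solution A b sg g p T x" "x 0 \<in> phase_dom A" "fst (x 0) < \<gamma> * exp (- A * T) / b"
  shows "fst (x (real k * T)) \<le> fst (x 0) \<and> snd (x (real k * T)) \<le> snd (x 0)"
proof (induction k)
  case (Suc k)
  have pd: "x (real k * T) \<in> phase_dom A" using solution_phase_dom[OF x(1,2)] .
  have "fst (x (real k * T)) < \<gamma> * exp (- A * T) / b" using Suc x(3) by simp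
  then have "b * fst (x (real k * T)) < \<gamma> * exp (- A * T)" using b_pos by (simp add: field_simps)
  then have "b * (fst (x (real k * T)) * exp (A * T)) \<le> \<gamma>"
    using mult_right_mono[of "b * fst (x (real k * T))" "\<gamma> * exp (- A * T)" "exp (A * T)"]
    by (simp add: mult.assoc flip: exp_add)
  note step = small_S_step[OF x(1) pd this]
  have "(1 - p) * exp (A * T) * fst (x (real k * T)) \<le> fst (x (real k * T))"
    using pd E p_less_1 by (intro mult_left_le_one_le) (auto simp: phase_dom_def)
  then show ?case using Suc step by auto
qed simp

lemma origin_stable:
  assumes "(1 - p) * exp (A * T) \<le> 1"
  shows "is_stable A b sg g p T (0, 0)"
proof (rule is_stableI)
  show "(0, 0) \<in> phase_dom A" using A_pos by (simp add: phase_dom_def)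
  fix e :: real assume "0 < e"
  define \<eta> where "\<eta> = min e (\<gamma> * exp (- A * T) / b)"
  have "x (real k * T) \<in> phase_dom A \<and> norm (x (real k * T)) < e"
    if x: "is_solution A b sg g p T x" "x 0 \<in> phase_dom A" "norm (x 0) < \<eta>" for x k
  proof -
    have "norm (x 0) < \<gamma> * exp (- A * T) / b" using x(3) by (simp add: \<eta>_def)
    then have "fst (x 0) < \<gamma> * exp (- A * T) / b"
      using norm_fst_le[of "fst (x 0)" "snd (x 0)"] abs_ge_self[of "fst (x 0)"] by simp
    from near_origin_le_start[OF assms x(1,2) this, of k] solution_phase_dom[OF x(1,2), of k]
    have "x (real k * T) \<in> phase_dom A" "norm (x (real k * T)) \<le> norm (x 0)"
      unfolding norm_prod_def by (auto simp: phase_dom_def intro!: real_sqrt_le_mono add_mono power_mono)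
    then show ?thesis using x(3) by (simp add: \<eta>_def)
  qed
  moreover have "0 < \<eta>" using \<open>0 < e\<close> sg_g_pos b_pos by (simp add: \<eta>_def)
  ultimately show "\<exists>\<eta>>0. \<eta> \<le> e \<and> (\<forall>x. is_solution A b sg g p T x \<and> x 0 \<in> phase_dom A \<and>
      dist (0, 0) (x 0) < \<eta> \<longrightarrow> (\<forall>k. dist (0, 0) (x (real k * T)) < e))"
    by (auto simp: dist_origin \<eta>_def intro!: exI[of _ \<eta>])
qed

lemma lyapunov_impulses_nonincreasing:
  assumes \<mu>: "\<mu> \<le> 0" and x: "is_solution A b sg g p T x" "x 0 \<in> phase_dom A" "fst (x 0) > 0"
  shows "snd (x (real k * T)) * fst (x (real k * T)) powr b \<le> snd (x 0) * fst (x 0) powr b"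
proof -
  have pd: "x (real k * T) \<in> phase_dom A" for k using solution_phase_dom[OF x(1,2)] .
  have S: "fst (x (real k * T)) > 0" for k
    by (induction k) (use x(3) inverse_S_step_lower(1)[OF x(1) pd] in auto)
  show ?thesis
  proof (induction k)
    case (Suc k)
    have "0 \<le> snd (x (real k * T)) * fst (x (real k * T)) powr b"
      using pd[of k] by (simp add: phase_dom_def)
    then have "exp \<mu> * (snd (x (real k * T)) * fst (x (real k * T)) powr b)
        \<le> snd (x (real k * T)) * fst (x (real k * T)) powr b"
      using \<mu> by (simp add: mult_left_le_one_le)
    then show ?case using lyapunov_step(1)[OF x(1) pd S, of k] Suc by linarith
  qed simp
qed

text \<open>While I stays below the bound, I * S powr b grows geometrically at the impulse times, but
  it is bounded because S \<le> A.\<close>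

lemma infection_not_small:
  assumes \<mu>: "0 < \<mu>"
    and x: "is_solution A b sg g p T x" "x 0 \<in> phase_dom A" "fst (x 0) > 0" "snd (x 0) > 0"
  shows "\<exists>k. \<mu> / (2 * b\<^sup>2 * exp (b * A * T) * T) \<le> snd (x (real k * T))"
proof (rule ccontr)
  define d where "d = \<mu> / (2 * b\<^sup>2 * exp (b * A * T) * T)"
  assume "\<not> (\<exists>k. \<mu> / (2 * b\<^sup>2 * exp (b * A * T) * T) \<le> snd (x (real k * T)))"
  then have small: "snd (x (real k * T)) < d" for k by (auto simp: d_def not_le)
  have pd: "x (real k * T) \<in> phase_dom A" for k using solution_phase_dom[OF x(1,2)] .
  have S: "fst (x (real k * T)) > 0" for k
    by (induction k) (use x(3) inverse_S_step_lower(1)[OF x(1) pd] in auto)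
  define P where "P k = snd (x (real k * T)) * fst (x (real k * T)) powr b" for k
  have growth: "exp (\<mu> / 2) * P k \<le> P (Suc k)" for k
  proof -
    have "snd (x t) \<le> d * exp (b * A * T)" if "real k * T < t" "t < real (Suc k) * T" for t
      using I_bound_on_period[OF x(1) pd less_imp_le[OF that(1)] that(2)] small[of k]
      by (smt (verit) exp_gt_zero mult_right_mono)
    from lyapunov_step(2)[OF x(1) pd S this]
    have "exp (\<mu> - b\<^sup>2 * (d * exp (b * A * T)) * T) * P k \<le> P (Suc k)" by (simp add: P_def)
    moreover have "\<mu> - b\<^sup>2 * (d * exp (b * A * T)) * T = \<mu> / 2"
      using b_pos T_pos by (simp add: d_def field_simps)
    ultimately show ?thesis by simp
  qed
  have "exp (\<mu> / 2) ^ k * P 0 \<le> P k" for k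
  proof (induction k)
    case (Suc k)
    then show ?case using growth[of k] by (smt (verit) exp_gt_zero mult.assoc mult_left_mono power_Suc)
  qed simp
  moreover have "P k \<le> d * A powr b" for k
    using pd[of k] small[of k] S[of k] b_pos
    by (auto simp: P_def phase_dom_def intro!: mult_mono powr_mono2)
  moreover have "P 0 > 0" using x(3,4) by (simp add: P_def)
  moreover obtain k where "d * A powr b / P 0 < exp (\<mu> / 2) ^ k"
    using real_arch_pow[of "exp (\<mu> / 2)"] \<mu> by auto
  ultimately show False by (smt (verit) pos_divide_less_eq)
qed

context
  assumes persistent: "1 < (1 - p) * exp (A * T)"
begin

lemma \<alpha>_less_1: "\<alpha> < 1"
proof -
  have "exp (- A * T) * exp (A * T) < (1 - p) * exp (A * T)" using persistent by (simp flip: exp_add)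
  then show ?thesis using p_less_1 by (simp add: \<alpha>_def)
qed

definition \<zeta> :: real where "\<zeta> = \<beta> / (1 - \<alpha>)"

lemma \<zeta>_pos: "0 < \<zeta>"
  using \<alpha>_less_1 A_pos T_pos p_less_1 by (simp add: \<zeta>_def \<beta>_def)

lemma \<zeta>_fixpoint: "\<alpha> * \<zeta> + \<beta> = \<zeta>"
  using \<alpha>_less_1 by (simp add: \<zeta>_def field_simps)

lemma calS_0: "calS A p T 0 = 1 / \<zeta>"
proof -
  define E where "E = exp (A * T)"
  have "E > 1" using A_pos T_pos by (simp add: E_def)
  have e: "exp (- A * T) = 1 / E" by (simp add: E_def exp_minus field_simps)
  define B where "B = E * (1 - p)"
  have "B > 1" using persistent by (simp add: B_def E_def mult.commute)
  have "1 - \<alpha> = (B - 1) / B" "\<beta> = (E - 1) / (A * B)"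
    unfolding \<alpha>_def \<beta>_def e B_def using \<open>E > 1\<close> A_pos p_less_1 by (simp_all add: field_simps)
  then have "\<zeta> = (E - 1) / (A * B) / ((B - 1) / B)" by (simp add: \<zeta>_def)
  also have "\<dots> = (E - 1) / (A * (B - 1))"
    using \<open>B > 1\<close> A_pos by (simp add: divide_divide_eq_left divide_divide_eq_right)
  finally have "\<zeta> = (E - 1) / (A * (E * (1 - p) - 1))" by (simp add: B_def)
  moreover have "calS A p T 0 = A * (E * (1 - p) - 1) / (E - 1)"
    by (simp add: calS_def E_def algebra_simps)
  ultimately show ?thesis by simp
qed

lemma calS_0_bounds: "0 < 1 / \<zeta>" "1 / \<zeta> < A"
proof -
  show "0 < 1 / \<zeta>" using \<zeta>_pos by simp
  define E where "E = exp (A * T)"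
  have "E > 1" using A_pos T_pos by (simp add: E_def)
  have "A * (E * (1 - p) - 1) < A * (E - 1)" using p_pos \<open>E > 1\<close> A_pos by (simp add: algebra_simps)
  then have "A * (E * (1 - p) - 1) / (E - 1) < A" using \<open>E > 1\<close> by (simp add: divide_less_eq)
  then show "1 / \<zeta> < A" using calS_0 by (simp add: calS_def E_def algebra_simps)
qed

lemma disease_free_solution: "is_solution A b sg g p T (\<lambda>t. (calS A p T t, 0))"
proof -
  define K where "K = exp (A * T) * (1 - p) - 1"
  define f where "f \<tau> = A * K / (K + p * exp (A * (T - \<tau>)))" for \<tau>
  have "K > 0" using persistent by (simp add: K_def mult.commute)
  then have denom: "K + p * exp (A * (T - \<tau>)) > 0" for \<tau> using p_pos by (simp add: add_pos_pos)
  have deriv: "(f has_real_derivative f \<tau> * (A - f \<tau>)) (at \<tau>)" for \<tau>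
  proof -
    have "(f has_real_derivative
        - (A * K * (p * (exp (A * (T - \<tau>)) * (A * (0 - 1))))) / (K + p * exp (A * (T - \<tau>)))\<^sup>2) (at \<tau>)"
      unfolding f_def[abs_def] using denom[of \<tau>]
      by (auto intro!: derivative_eq_intros simp: power2_eq_square)
    then show ?thesis
      by (rule DERIV_cong) (use denom[of \<tau>] in \<open>simp add: f_def field_simps power2_eq_square\<close>)
  qed
  have "solves_on 0 T (\<lambda>\<tau>. (f \<tau>, 0))"
    unfolding solves_on_def
  proof (intro conjI allI impI)
    show "continuous_on {0..T} (\<lambda>\<tau>. (f \<tau>, 0::real))"
      unfolding f_def using denom by (intro continuous_intros) (auto simp: less_imp_neq[symmetric])
    fix \<tau> show "((\<lambda>\<tau>. (f \<tau>, 0::real)) has_vector_derivative vfield A b sg g (f \<tau>, 0)) (at \<tau>)"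
      using deriv[of \<tau>] by (auto intro!: derivative_eq_intros
          simp: vfield_def has_real_derivative_iff_has_vector_derivative[symmetric])
  qed
  moreover have "calS A p T t = f (t - real k * T)" if "real k * T \<le> t" "t < real (Suc k) * T" for k t
    using period_index[OF that] that by (simp add: calS_def f_def K_def Let_def)
  moreover have "f 0 = (1 - p) * f T"
  proof -
    have "f 0 = A * K / (exp (A * T) - 1)" by (simp add: f_def K_def algebra_simps)
    also have "\<dots> = (1 - p) * (A * K / ((1 - p) * (exp (A * T) - 1)))" using p_less_1 by simp
    also have "\<dots> = (1 - p) * f T" by (simp add: f_def K_def algebra_simps)
    finally show ?thesis .
  qed
  ultimately show ?thesis by (intro is_solution_from_pieces[where z="\<lambda>_ \<tau>. (f \<tau>, 0)"]) auto
qed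

lemma disease_free_convergence:
  assumes x: "is_solution A b sg g p T x" "x 0 \<in> phase_dom A" "fst (x 0) > 0" "snd (x 0) = 0"
  shows "(\<lambda>k. fst (x (real k * T))) \<longlonglongrightarrow> 1 / \<zeta>"
proof -
  have pd: "x (real k * T) \<in> phase_dom A" for k using solution_phase_dom[OF x(1,2)] .
  have I: "snd (x (real k * T)) = 0" for k
    by (induction k) (use x(4) I_zero_step(1)[OF x(1)] in auto)
  have S: "fst (x (real k * T)) > 0" for k
    by (induction k) (use x(3) inverse_S_step_lower(1)[OF x(1) pd] in auto)
  have step: "1 / fst (x (real (Suc k) * T)) = \<alpha> * (1 / fst (x (real k * T))) + \<beta>" for k
  proof -
    have "snd (x t) \<le> 0" if "real k * T < t" "t < real (Suc k) * T" for t
      using I_zero_step(2)[OF x(1) I[of k], of t] that by simp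
    from inverse_S_step_upper[OF x(1) S _ this] have
      "1 / fst (x (real (Suc k) * T)) \<le> \<alpha> * (1 / fst (x (real k * T))) + \<beta>"
      using A_pos by (simp add: inverse_S_map_0)
    with inverse_S_step_lower(2)[OF x(1) pd[of k] S[of k]] show ?thesis by linarith
  qed
  have closed_form: "1 / fst (x (real k * T)) = \<zeta> + \<alpha> ^ k * (1 / fst (x 0) - \<zeta>)" for k
  proof (induction k)
    case (Suc k)
    have "1 / fst (x (real (Suc k) * T)) = \<alpha> * (\<zeta> + \<alpha> ^ k * (1 / fst (x 0) - \<zeta>)) + \<beta>"
      using step[of k] Suc by simp
    also have "\<dots> = (\<alpha> * \<zeta> + \<beta>) + \<alpha> ^ Suc k * (1 / fst (x 0) - \<zeta>)"
      by (simp add: algebra_simps)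
    finally show ?case using \<zeta>_fixpoint by simp
  qed simp
  have "(\<lambda>k. \<zeta> + \<alpha> ^ k * (1 / fst (x 0) - \<zeta>)) \<longlonglongrightarrow> \<zeta> + 0 * (1 / fst (x 0) - \<zeta>)"
    using \<alpha>_pos \<alpha>_less_1 by (intro tendsto_intros LIMSEQ_power_zero) auto
  then have "(\<lambda>k. 1 / (1 / fst (x (real k * T)))) \<longlonglongrightarrow> 1 / \<zeta>"
    using \<zeta>_pos by (intro tendsto_divide) (auto simp: closed_form)
  then show ?thesis by simp
qed

lemma origin_unstable: "\<not> is_stable A b sg g p T (0, 0)"
proof (rule not_is_stableI)
  show "(0, 0) \<in> phase_dom A" using A_pos by (simp add: phase_dom_def)
  show "0 < 1 / (2 * \<zeta>)" using \<zeta>_pos by simp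
  fix \<eta> :: real assume "0 < \<eta>"
  define s0 where "s0 = min (\<eta> / 2) A"
  have s0: "0 < s0" "(s0, 0) \<in> phase_dom A" "dist (0, 0) (s0, 0) < \<eta>"
    using \<open>0 < \<eta>\<close> A_pos by (auto simp: s0_def phase_dom_def dist_Pair_Pair)
  obtain x where x: "is_solution A b sg g p T x" "x 0 = (s0, 0)"
    using is_solution_exists[OF s0(2)] by blast
  have "1 / (2 * \<zeta>) < 1 / \<zeta>" using \<zeta>_pos by (simp add: field_simps)
  with disease_free_convergence[OF x(1)] x(2) s0
  have "\<forall>\<^sub>F k in sequentially. 1 / (2 * \<zeta>) < fst (x (real k * T))"
    by (intro order_tendstoD(1)) auto
  then obtain k where "1 / (2 * \<zeta>) < fst (x (real k * T))"
    unfolding eventually_sequentially by auto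
  then have "1 / (2 * \<zeta>) \<le> dist (0, 0) (x (real k * T))"
    using norm_fst_le[of "fst (x (real k * T))" "snd (x (real k * T))"] by (simp add: dist_origin)
  then show "\<exists>x. is_solution A b sg g p T x \<and> x 0 \<in> phase_dom A \<and> dist (0, 0) (x 0) < \<eta> \<and>
      (\<exists>k. 1 / (2 * \<zeta>) \<le> dist (0, 0) (x (real k * T)))"
    using x s0 by auto
qed

lemma disease_free_unstable:
  assumes "0 < \<mu>"
  shows "\<not> is_stable A b sg g p T (1 / \<zeta>, 0)"
proof (rule not_is_stableI)
  show "(1 / \<zeta>, 0) \<in> phase_dom A" using calS_0_bounds by (simp add: phase_dom_def)
  show "0 < \<mu> / (2 * b\<^sup>2 * exp (b * A * T) * T)" using assms b_pos T_pos by simp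
  fix \<eta> :: real assume "0 < \<eta>"
  then have start: "(1 / \<zeta>, \<eta> / 2) \<in> phase_dom A" "dist (1 / \<zeta>, 0) (1 / \<zeta>, \<eta> / 2) < \<eta>"
    using calS_0_bounds by (auto simp: phase_dom_def dist_Pair_Pair)
  obtain x where x: "is_solution A b sg g p T x" "x 0 = (1 / \<zeta>, \<eta> / 2)"
    using is_solution_exists[OF start(1)] by blast
  obtain k where "\<mu> / (2 * b\<^sup>2 * exp (b * A * T) * T) \<le> snd (x (real k * T))"
    using infection_not_small[OF assms x(1)] x(2) start(1) calS_0_bounds \<open>0 < \<eta>\<close> by auto
  moreover have "snd (x (real k * T)) \<le> dist (1 / \<zeta>, 0) (x (real k * T))"
    using dist_snd_le[of "(1 / \<zeta>, 0)" "x (real k * T)"] by (simp add: dist_real_def)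
  ultimately show "\<exists>x. is_solution A b sg g p T x \<and> x 0 \<in> phase_dom A \<and> dist (1 / \<zeta>, 0) (x 0) < \<eta> \<and>
      (\<exists>k. \<mu> / (2 * b\<^sup>2 * exp (b * A * T) * T) \<le> dist (1 / \<zeta>, 0) (x (real k * T)))"
    using x start by (intro exI[of _ x]) (auto intro!: exI[of _ k])
qed

lemma infection_margin:
  assumes "0 < \<rho>"
  obtains M where "0 < M" "b * M < A" "inverse_S_map M (\<zeta> + \<rho>) < \<zeta> + \<rho>"
proof -
  have "isCont (\<lambda>M. inverse_S_map M (\<zeta> + \<rho>)) 0"
    unfolding inverse_S_map_def using A_pos p_less_1 by (intro continuous_intros) auto
  moreover have "inverse_S_map 0 (\<zeta> + \<rho>) = \<zeta> + \<alpha> * \<rho>"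
    using \<zeta>_fixpoint by (simp add: inverse_S_map_0 algebra_simps)
  ultimately have "((\<lambda>M. inverse_S_map M (\<zeta> + \<rho>)) \<longlongrightarrow> \<zeta> + \<alpha> * \<rho>) (at_right 0)"
    by (simp add: isCont_def filterlim_at_split)
  moreover have "\<zeta> + \<alpha> * \<rho> < \<zeta> + \<rho>" using \<alpha>_less_1 assms by simp
  ultimately have "\<forall>\<^sub>F M in at_right 0. inverse_S_map M (\<zeta> + \<rho>) < \<zeta> + \<rho>"
    by (rule order_tendstoD)
  moreover have "((\<lambda>M. b * M) \<longlongrightarrow> 0) (at_right (0::real))"
    by (auto intro!: tendsto_eq_intros)
  then have "\<forall>\<^sub>F M in at_right 0. b * M < A" using A_pos by (rule order_tendstoD)
  moreover have "\<forall>\<^sub>F M in at_right 0. 0 < (M::real)" by (rule eventually_at_right_less)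
  ultimately have "\<forall>\<^sub>F M in at_right 0. 0 < M \<and> b * M < A \<and> inverse_S_map M (\<zeta> + \<rho>) < \<zeta> + \<rho>"
    by eventually_elim auto
  then show ?thesis using that eventually_happens'[OF trivial_limit_at_right_real] by blast
qed

lemma infection_bound_near_disease_free:
  assumes \<mu>: "\<mu> \<le> 0" and \<rho>: "0 < \<rho>" "\<rho> < \<zeta>"
    and x: "is_solution A b sg g p T x" "x 0 \<in> phase_dom A" "\<bar>1 / fst (x 0) - \<zeta>\<bar> \<le> \<rho>"
    and near: "\<bar>1 / fst (x (real k * T)) - \<zeta>\<bar> \<le> \<rho>"
  shows "snd (x (real k * T)) \<le> snd (x 0) * ((\<zeta> + \<rho>) / (\<zeta> - \<rho>)) powr b"
proof -
  have "fst (x 0) \<noteq> 0" using x(3) \<rho> by auto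
  then have S0: "fst (x 0) > 0" using x(2) by (simp add: phase_dom_def)
  have "fst (x (real k * T)) \<noteq> 0" using near \<rho> by auto
  then have "1 / (\<zeta> + \<rho>) \<le> fst (x (real k * T))"
    using near solution_phase_dom[OF x(1,2), of k] \<rho>
    by (auto simp: abs_le_iff divide_le_eq field_simps phase_dom_def)
  moreover have "fst (x 0) \<le> 1 / (\<zeta> - \<rho>)"
    using x(3) S0 \<rho> by (simp add: abs_le_iff le_divide_eq field_simps)
  ultimately have "snd (x (real k * T)) \<le> snd (x 0) * (1 / (\<zeta> - \<rho>) / (1 / (\<zeta> + \<rho>))) powr b"
    using \<rho> \<zeta>_pos S0 x(2) b_pos
    by (intro le_of_mult_powr_le[OF lyapunov_impulses_nonincreasing[OF \<mu> x(1,2) S0]]) (simp_all add: phase_dom_def)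
  then show ?thesis by simp
qed

text \<open>1 / S stays near \<zeta> as long as I stays small, and I stays small because I * S powr b does
  not grow while S stays away from 0.\<close>

lemma disease_free_trapping:
  assumes \<mu>: "\<mu> \<le> 0" and \<rho>: "0 < \<rho>" "\<rho> \<le> \<zeta> / 2"
    and M: "b * M < A" "inverse_S_map M (\<zeta> + \<rho>) < \<zeta> + \<rho>"
    and x: "is_solution A b sg g p T x" "x 0 \<in> phase_dom A" "\<bar>1 / fst (x 0) - \<zeta>\<bar> \<le> \<rho>"
    and small: "snd (x 0) * ((\<zeta> + \<rho>) / (\<zeta> - \<rho>)) powr b * exp (b * A * T) \<le> M"
  shows "\<bar>1 / fst (x (real k * T)) - \<zeta>\<bar> \<le> \<rho>"
proof (induction k)
  case 0
  then show ?case using x(3) by simp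
next
  case (Suc k)
  have pd: "x (real k * T) \<in> phase_dom A" using solution_phase_dom[OF x(1,2)] .
  have S: "fst (x (real k * T)) > 0" using Suc \<rho> pd by (cases "fst (x (real k * T)) = 0") (auto simp: phase_dom_def)
  have "snd (x t) \<le> M" if "real k * T < t" "t < real (Suc k) * T" for t
  proof -
    have "snd (x t) \<le> snd (x (real k * T)) * exp (b * A * T)"
      using I_bound_on_period[OF x(1) pd less_imp_le[OF that(1)] that(2)] .
    also have "\<dots> \<le> snd (x 0) * ((\<zeta> + \<rho>) / (\<zeta> - \<rho>)) powr b * exp (b * A * T)"
      using infection_bound_near_disease_free[OF \<mu> \<rho>(1) _ x Suc] \<rho>(2) \<zeta>_pos
      by (intro mult_right_mono) auto
    finally show ?thesis using small by simp
  qed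
  then have "1 / fst (x (real (Suc k) * T)) \<le> inverse_S_map M (1 / fst (x (real k * T)))"
    by (rule inverse_S_step_upper[OF x(1) S M(1)])
  also have "\<dots> \<le> inverse_S_map M (\<zeta> + \<rho>)" using Suc by (intro inverse_S_map_mono) simp
  finally have upper: "1 / fst (x (real (Suc k) * T)) < \<zeta> + \<rho>" using M(2) by simp
  have "\<alpha> * (- \<rho>) \<le> \<alpha> * (1 / fst (x (real k * T)) - \<zeta>)"
    using Suc \<alpha>_pos by (intro mult_left_mono) auto
  moreover have "\<alpha> * \<rho> \<le> \<rho>" using \<alpha>_less_1 \<rho> by simp
  ultimately have "\<alpha> * (1 / fst (x (real k * T)) - \<zeta>) \<ge> - \<rho>" by simp
  then have "\<zeta> - \<rho> \<le> 1 / fst (x (real (Suc k) * T))"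
    using inverse_S_step_lower(2)[OF x(1) pd S] \<zeta>_fixpoint by (simp add: algebra_simps)
  then show ?case using upper by simp
qed

lemma disease_free_stable:
  assumes \<mu>: "\<mu> < 0"
  shows "is_stable A b sg g p T (1 / \<zeta>, 0)"
proof (rule is_stableI)
  define s where "s = 1 / \<zeta>"
  have s: "0 < s" "\<zeta> = 1 / s" using \<zeta>_pos by (auto simp: s_def)
  show "(1 / \<zeta>, 0) \<in> phase_dom A" using calS_0_bounds by (simp add: phase_dom_def)
  fix e :: real assume e: "0 < e"
  define \<rho> where "\<rho> = min (\<zeta> / 2) (e * \<zeta>\<^sup>2 / 8)"
  have \<rho>: "0 < \<rho>" "\<rho> \<le> \<zeta> / 2" "\<rho> \<le> e * \<zeta>\<^sup>2 / 8" using \<zeta>_pos e by (auto simp: \<rho>_def)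
  obtain M where M: "0 < M" "b * M < A" "inverse_S_map M (\<zeta> + \<rho>) < \<zeta> + \<rho>"
    using infection_margin[OF \<rho>(1)] by blast
  define C where "C = ((\<zeta> + \<rho>) / (\<zeta> - \<rho>)) powr b"
  have C: "0 < C" using \<rho> by (simp add: C_def)
  define \<eta> where "\<eta> = min (min (s / 2) (\<rho> * s\<^sup>2 / 2)) (min (M / (C * exp (b * A * T))) (min (e / (2 * C)) e))"
  have \<eta>: "0 < \<eta>" "\<eta> \<le> e" using s(1) \<rho>(1) M(1) C e by (auto simp: \<eta>_def)
  have \<eta>_s: "\<eta> \<le> s / 2" "\<eta> \<le> \<rho> * s\<^sup>2 / 2"
    unfolding \<eta>_def by (rule min.coboundedI1, rule min.cobounded1) (rule min.coboundedI1, rule min.cobounded2)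
  have "\<eta> \<le> M / (C * exp (b * A * T))" by (simp add: \<eta>_def)
  then have \<eta>_M: "\<eta> * (C * exp (b * A * T)) \<le> M" using C by (simp add: pos_le_divide_eq)
  have "\<eta> \<le> e / (2 * C)" by (simp add: \<eta>_def)
  then have \<eta>_e: "\<eta> * C \<le> e / 2" using C by (simp add: pos_le_divide_eq)
  have "dist (s, 0) (x (real k * T)) < e"
    if x: "is_solution A b sg g p T x" "x 0 \<in> phase_dom A" "dist (s, 0) (x 0) < \<eta>" for x k
  proof -
    have close0: "\<bar>fst (x 0) - s\<bar> < \<eta>" "0 \<le> snd (x 0)" "snd (x 0) < \<eta>"
      using x(2,3) dist_fst_le[of "(s, 0)" "x 0"] dist_snd_le[of "(s, 0)" "x 0"]
      by (auto simp: dist_real_def abs_minus_commute phase_dom_def)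
    have "\<bar>1 / fst (x 0) - \<zeta>\<bar> \<le> 2 * \<bar>fst (x 0) - s\<bar> / s\<^sup>2"
      using abs_inverse_diff_le[of s "fst (x 0)"] close0 \<eta>_s(1) s by simp
    also have "\<dots> \<le> \<rho>" using close0(1) \<eta>_s(2) s(1) by (simp add: field_simps)
    finally have z0: "\<bar>1 / fst (x 0) - \<zeta>\<bar> \<le> \<rho>" .
    have "snd (x 0) * (C * exp (b * A * T)) \<le> \<eta> * (C * exp (b * A * T))"
      using close0(3) C by (intro mult_right_mono) auto
    then have "snd (x 0) * C * exp (b * A * T) \<le> M" using \<eta>_M by (simp add: mult.assoc)
    note trap = disease_free_trapping[OF less_imp_le[OF \<mu>] \<rho>(1,2) M(2,3) x(1,2) z0 this[unfolded C_def]]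
    have "\<bar>fst (x (real k * T)) - s\<bar> \<le> 2 * \<bar>1 / fst (x (real k * T)) - \<zeta>\<bar> / \<zeta>\<^sup>2"
      using abs_inverse_diff_le[of \<zeta> "1 / fst (x (real k * T))"] trap[of k] \<rho>(2) \<zeta>_pos by (simp add: s_def)
    also have "\<dots> \<le> 2 * \<rho> / \<zeta>\<^sup>2" using trap[of k] by (simp add: divide_right_mono)
    also have "\<dots> < e / 2" using \<rho>(1,3) \<zeta>_pos e by (simp add: field_simps)
    finally have "\<bar>s - fst (x (real k * T))\<bar> < e / 2" by (simp add: abs_minus_commute)
    moreover have "snd (x (real k * T)) \<le> snd (x 0) * C"
      using infection_bound_near_disease_free[OF less_imp_le[OF \<mu>] \<rho>(1) _ x(1,2) z0 trap[of k]] \<rho>(2) \<zeta>_pos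
      by (simp add: C_def)
    then have "\<bar>0 - snd (x (real k * T))\<bar> < e / 2"
      using close0(3) C \<eta>_e solution_phase_dom[OF x(1,2), of k]
      by (simp add: phase_dom_def) (smt (verit) mult_strict_right_mono)
    ultimately show ?thesis using dist_le_abs_fst_snd[of "(s, 0)" "x (real k * T)"] by simp
  qed
  then show "\<exists>\<eta>>0. \<eta> \<le> e \<and> (\<forall>x. is_solution A b sg g p T x \<and> x 0 \<in> phase_dom A \<and>
      dist (1 / \<zeta>, 0) (x 0) < \<eta> \<longrightarrow> (\<forall>k. dist (1 / \<zeta>, 0) (x (real k * T)) < e))"
    using \<eta> unfolding s_def by blast
qed

end

lemma below_T1_iff: "T < T1 A p \<longleftrightarrow> (1 - p) * exp (A * T) < 1"
  and above_T1_iff: "T1 A p < T \<longleftrightarrow> 1 < (1 - p) * exp (A * T)"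
proof -
  have "\<bar>ln (1 - p)\<bar> = - ln (1 - p)" using p_pos p_less_1 by simp
  then have E: "(1 - p) * exp (A * T) = exp (A * T - \<bar>ln (1 - p)\<bar>)"
    using p_less_1 by (simp add: exp_add)
  have "T < T1 A p \<longleftrightarrow> A * T < \<bar>ln (1 - p)\<bar>"
    using A_pos by (simp add: T1_def pos_less_divide_eq mult.commute)
  then show "T < T1 A p \<longleftrightarrow> (1 - p) * exp (A * T) < 1" unfolding E by simp
  have "T1 A p < T \<longleftrightarrow> \<bar>ln (1 - p)\<bar> < A * T"
    using A_pos by (simp add: T1_def pos_divide_less_eq mult.commute)
  then show "T1 A p < T \<longleftrightarrow> 1 < (1 - p) * exp (A * T)" unfolding E by simp
qed

lemma \<mu>_sign:
  assumes "Sc b sg g < A"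
  shows "T < T2 A b sg g p \<longleftrightarrow> \<mu> < 0" and "T2 A b sg g p < T \<longleftrightarrow> 0 < \<mu>"
proof -
  have "\<bar>ln (1 - p)\<bar> = - ln (1 - p)" using p_pos p_less_1 by simp
  then have \<mu>: "\<mu> = b * ((A - Sc b sg g) * T - \<bar>ln (1 - p)\<bar>)"
    using b_pos by (simp add: \<mu>_def Sc_def field_simps)
  have "T < T2 A b sg g p \<longleftrightarrow> (A - Sc b sg g) * T < \<bar>ln (1 - p)\<bar>"
    using assms by (simp add: T2_def pos_less_divide_eq mult.commute)
  then show "T < T2 A b sg g p \<longleftrightarrow> \<mu> < 0"
    unfolding \<mu> using b_pos by (simp add: mult_less_0_iff)
  have "T2 A b sg g p < T \<longleftrightarrow> \<bar>ln (1 - p)\<bar> < (A - Sc b sg g) * T"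
    using assms by (simp add: T2_def pos_divide_less_eq mult.commute)
  then show "T2 A b sg g p < T \<longleftrightarrow> 0 < \<mu>"
    unfolding \<mu> using b_pos by (simp add: zero_less_mult_iff)
qed

lemma T1_less_T2:
  assumes "Sc b sg g < A"
  shows "T1 A p < T2 A b sg g p"
proof -
  have "0 < Sc b sg g" using sg_g_pos b_pos by (simp add: Sc_def)
  moreover have "0 < \<bar>ln (1 - p)\<bar>" using p_pos p_less_1 by simp
  ultimately show ?thesis using assms A_pos by (simp add: T1_def T2_def frac_less2)
qed

end

theorem corollary2:
  fixes A beta0 sg g p T :: real
  assumes "0 < A" "A \<le> 1" "beta0 > 0" "sg \<ge> 0" "g \<ge> 0" "sg + g > 0"
    and "0 < p" "p < 1" "T > 0"
    and "A > Sc beta0 sg g"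
  shows
    "(T < T1 A p \<longrightarrow>
        (\<forall>x. is_solution A beta0 sg g p T x \<and> x 0 \<in> phase_dom A \<and> is_T_periodic T x
              \<longrightarrow> (\<forall>t\<ge>0. x t = (0, 0))) \<and>
        is_stable A beta0 sg g p T (0, 0)) \<and>
     (T1 A p < T \<and> T < T2 A beta0 sg g p \<longrightarrow>
        is_solution A beta0 sg g p T (\<lambda>t. (calS A p T t, 0)) \<and>
        is_stable A beta0 sg g p T (calS A p T 0, 0) \<and>
        \<not> is_stable A beta0 sg g p T (0, 0)) \<and>
     (T > T2 A beta0 sg g p \<longrightarrow>
        is_solution A beta0 sg g p T (\<lambda>t. (calS A p T t, 0)) \<and>
        \<not> is_stable A beta0 sg g p T (calS A p T 0, 0) \<and>
        \<not> is_stable A beta0 sg g p T (0, 0))"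
proof -
  interpret impulsive_SI A beta0 sg g p T
    using assms by unfold_locales auto
  have "T2 A beta0 sg g p < T \<Longrightarrow> T1 A p < T" using T1_less_T2 assms(10) by linarith
  then show ?thesis
    using periodic_solution_trivial origin_stable origin_unstable
      disease_free_solution disease_free_stable disease_free_unstable calS_0
      below_T1_iff above_T1_iff \<mu>_sign[OF assms(10)]
    by auto
qed

end
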